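(* Let $\mathbf{k}$ be a commutative ring in which $2$ is invertible, and let $\mathcal{C}$ be a $\mathbf{k}$-linear supercategory whose underlying additive category is idempotent-complete. Then $(\mathcal{C}^{ct})^{ct}$ is equivalent to $\mathcal{C}$ as a supercategory.
   Context: An additive category is idempotent-complete if $\ker(p)$ exists for every object $X$ and $p\in\mathrm{End}(X)$ with $p^2=p$. A supercategory is a $\mathbf{k}$-linear additive category $\mathcal{C}$ with an endofunctor $\Pi$ and an isomorphism $\xi:\Pi^2\xrightarrow\sim\mathrm{id}$ with $\xi\circ\Pi=\Pi\circ\xi$. A superfunctor is a functor $F$ with an isomorphism $\alpha_F:F\Pi\xrightarrow\sim\Pi'F$ such that $(\xi'F)\circ(\Pi'\alpha_F)\circ(\alpha_F\Pi)=F\xi$; an equivalence of supercategories is a superfunctor whose functor is an equivalence. The Clifford twist $\mathcal{C}^{ct}$ has objects $(X,\varphi)$ with $\varphi:\Pi X\xrightarrow\sim X$, $\varphi\circ\Pi\varphi=\xi_X$, morphisms $f:X\to X'$ with $f\varphi=\varphi'\Pi f$, $\Pi^{ct}(X,\varphi)=(X,-\varphi)$, and $\xi^{ct}=\mathrm{id}$. *)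

theory Defs
  imports Main
begin

text \<open>Composition  Cmp X Y Z g f  is  g after f  for
  f : X -> Y, g : Y -> Z.\<close>

record ('o, 'm, 'k) lcat =
  Ob   :: "'o set"
  Hom  :: "'o \<Rightarrow> 'o \<Rightarrow> 'm set"
  Cmp  :: "'o \<Rightarrow> 'o \<Rightarrow> 'o \<Rightarrow> 'm \<Rightarrow> 'm \<Rightarrow> 'm"
  Id   :: "'o \<Rightarrow> 'm"
  Add  :: "'o \<Rightarrow> 'o \<Rightarrow> 'm \<Rightarrow> 'm \<Rightarrow> 'm"
  Zero :: "'o \<Rightarrow> 'o \<Rightarrow> 'm"
  Smul :: "'o \<Rightarrow> 'o \<Rightarrow> 'k \<Rightarrow> 'm \<Rightarrow> 'm"

text \<open>Supercategory data: endofunctor Pi (object and arrow part) and xi : Pi^2 -> id.\<close>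

record ('o, 'm, 'k) scat = "('o, 'm, 'k) lcat" +
  PiO :: "'o \<Rightarrow> 'o"
  PiA :: "'o \<Rightarrow> 'o \<Rightarrow> 'm \<Rightarrow> 'm"
  Xi  :: "'o \<Rightarrow> 'm"

definition category where
  "category C \<longleftrightarrow>
    (\<forall>X\<in>Ob C. Id C X \<in> Hom C X X) \<and>
    (\<forall>X\<in>Ob C. \<forall>Y\<in>Ob C. \<forall>Z\<in>Ob C. \<forall>f\<in>Hom C X Y. \<forall>g\<in>Hom C Y Z.
        Cmp C X Y Z g f \<in> Hom C X Z) \<and>
    (\<forall>X\<in>Ob C. \<forall>Y\<in>Ob C. \<forall>f\<in>Hom C X Y.
        Cmp C X Y Y (Id C Y) f = f \<and> Cmp C X X Y f (Id C X) = f) \<and>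
    (\<forall>W\<in>Ob C. \<forall>X\<in>Ob C. \<forall>Y\<in>Ob C. \<forall>Z\<in>Ob C.
       \<forall>f\<in>Hom C W X. \<forall>g\<in>Hom C X Y. \<forall>h\<in>Hom C Y Z.
        Cmp C W Y Z h (Cmp C W X Y g f) = Cmp C W X Z (Cmp C X Y Z h g) f)"

definition klinear :: "('o, 'm, 'k::comm_ring_1, 'z) lcat_scheme \<Rightarrow> bool" where
  "klinear C \<longleftrightarrow>
    (\<forall>X\<in>Ob C. \<forall>Y\<in>Ob C.
       Zero C X Y \<in> Hom C X Y \<and>
       (\<forall>f\<in>Hom C X Y. \<forall>g\<in>Hom C X Y. Add C X Y f g \<in> Hom C X Y) \<and>
       (\<forall>a. \<forall>f\<in>Hom C X Y. Smul C X Y a f \<in> Hom C X Y) \<and>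
       (\<forall>f\<in>Hom C X Y. \<forall>g\<in>Hom C X Y. \<forall>h\<in>Hom C X Y.
          Add C X Y (Add C X Y f g) h = Add C X Y f (Add C X Y g h)) \<and>
       (\<forall>f\<in>Hom C X Y. \<forall>g\<in>Hom C X Y. Add C X Y f g = Add C X Y g f) \<and>
       (\<forall>f\<in>Hom C X Y. Add C X Y (Zero C X Y) f = f) \<and>
       (\<forall>f\<in>Hom C X Y. \<exists>g\<in>Hom C X Y. Add C X Y f g = Zero C X Y) \<and>
       (\<forall>a. \<forall>f\<in>Hom C X Y. \<forall>g\<in>Hom C X Y.
          Smul C X Y a (Add C X Y f g) = Add C X Y (Smul C X Y a f) (Smul C X Y a g)) \<and>
       (\<forall>a b. \<forall>f\<in>Hom C X Y.
          Smul C X Y (a + b) f = Add C X Y (Smul C X Y a f) (Smul C X Y b f)) \<and>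
       (\<forall>a b. \<forall>f\<in>Hom C X Y. Smul C X Y (a * b) f = Smul C X Y a (Smul C X Y b f)) \<and>
       (\<forall>f\<in>Hom C X Y. Smul C X Y 1 f = f)) \<and>
    (\<forall>X\<in>Ob C. \<forall>Y\<in>Ob C. \<forall>Z\<in>Ob C. \<forall>f\<in>Hom C X Y. \<forall>f'\<in>Hom C X Y.
       \<forall>g\<in>Hom C Y Z. \<forall>g'\<in>Hom C Y Z.
       Cmp C X Y Z g (Add C X Y f f') = Add C X Z (Cmp C X Y Z g f) (Cmp C X Y Z g f') \<and>
       Cmp C X Y Z (Add C Y Z g g') f = Add C X Z (Cmp C X Y Z g f) (Cmp C X Y Z g' f) \<and>
       (\<forall>a. Cmp C X Y Z g (Smul C X Y a f) = Smul C X Z a (Cmp C X Y Z g f) \<and>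
            Cmp C X Y Z (Smul C Y Z a g) f = Smul C X Z a (Cmp C X Y Z g f)))"

definition additive :: "('o, 'm, 'k::comm_ring_1, 'z) lcat_scheme \<Rightarrow> bool" where
  "additive C \<longleftrightarrow> category C \<and> klinear C \<and>
    (\<exists>Z\<in>Ob C. Id C Z = Zero C Z Z) \<and>
    (\<forall>X\<in>Ob C. \<forall>Y\<in>Ob C. \<exists>S\<in>Ob C.
       \<exists>p1\<in>Hom C S X. \<exists>p2\<in>Hom C S Y. \<exists>i1\<in>Hom C X S. \<exists>i2\<in>Hom C Y S.
         Cmp C X S X p1 i1 = Id C X \<and> Cmp C Y S Y p2 i2 = Id C Y \<and>
         Cmp C Y S X p1 i2 = Zero C Y X \<and> Cmp C X S Y p2 i1 = Zero C X Y \<and>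
         Add C S S (Cmp C S X S i1 p1) (Cmp C S Y S i2 p2) = Id C S)"

definition is_kernel where
  "is_kernel C X Y p K k \<longleftrightarrow> K \<in> Ob C \<and> k \<in> Hom C K X \<and>
     Cmp C K X Y p k = Zero C K Y \<and>
     (\<forall>W\<in>Ob C. \<forall>f\<in>Hom C W X. Cmp C W X Y p f = Zero C W Y \<longrightarrow>
        (\<exists>g\<in>Hom C W K. Cmp C W K X k g = f \<and>
           (\<forall>g'\<in>Hom C W K. Cmp C W K X k g' = f \<longrightarrow> g' = g)))"

definition idem_complete where
  "idem_complete C \<longleftrightarrow>
    (\<forall>X\<in>Ob C. \<forall>p\<in>Hom C X X. Cmp C X X X p p = p \<longrightarrow>
       (\<exists>K k. is_kernel C X X p K k))"

definition iso where
  "iso C X Y f \<longleftrightarrow> f \<in> Hom C X Y \<and>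
     (\<exists>g\<in>Hom C Y X. Cmp C X Y X g f = Id C X \<and> Cmp C Y X Y f g = Id C Y)"

definition functor_on where
  "functor_on C D FO FA \<longleftrightarrow>
    (\<forall>X\<in>Ob C. FO X \<in> Ob D) \<and>
    (\<forall>X\<in>Ob C. \<forall>Y\<in>Ob C. \<forall>f\<in>Hom C X Y. FA X Y f \<in> Hom D (FO X) (FO Y)) \<and>
    (\<forall>X\<in>Ob C. FA X X (Id C X) = Id D (FO X)) \<and>
    (\<forall>X\<in>Ob C. \<forall>Y\<in>Ob C. \<forall>Z\<in>Ob C. \<forall>f\<in>Hom C X Y. \<forall>g\<in>Hom C Y Z.
       FA X Z (Cmp C X Y Z g f) = Cmp D (FO X) (FO Y) (FO Z) (FA Y Z g) (FA X Y f))"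

definition nat_iso where
  "nat_iso C D FO FA GO GA eta \<longleftrightarrow>
    (\<forall>X\<in>Ob C. iso D (FO X) (GO X) (eta X)) \<and>
    (\<forall>X\<in>Ob C. \<forall>Y\<in>Ob C. \<forall>f\<in>Hom C X Y.
       Cmp D (FO X) (GO X) (GO Y) (GA X Y f) (eta X) =
       Cmp D (FO X) (FO Y) (GO Y) (eta Y) (FA X Y f))"

definition equivalence where
  "equivalence C D FO FA \<longleftrightarrow> functor_on C D FO FA \<and>
    (\<exists>GO GA eta eps. functor_on D C GO GA \<and>
       nat_iso C C (\<lambda>X. GO (FO X)) (\<lambda>X Y f. GA (FO X) (FO Y) (FA X Y f))
                   (\<lambda>X. X) (\<lambda>X Y f. f) eta \<and>
       nat_iso D D (\<lambda>X. FO (GO X)) (\<lambda>X Y f. FA (GO X) (GO Y) (GA X Y f))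
                   (\<lambda>X. X) (\<lambda>X Y f. f) eps)"

definition supercategory :: "('o, 'm, 'k::comm_ring_1, 'z) scat_scheme \<Rightarrow> bool" where
  "supercategory C \<longleftrightarrow> additive C \<and>
    functor_on C C (PiO C) (PiA C) \<and>
    nat_iso C C (\<lambda>X. PiO C (PiO C X))
                (\<lambda>X Y f. PiA C (PiO C X) (PiO C Y) (PiA C X Y f))
                (\<lambda>X. X) (\<lambda>X Y f. f) (Xi C) \<and>
    (\<forall>X\<in>Ob C. Xi C (PiO C X) = PiA C (PiO C (PiO C X)) X (Xi C X))"

definition superfunctor where
  "superfunctor C D FO FA alpha \<longleftrightarrow> functor_on C D FO FA \<and>
    nat_iso C D (\<lambda>X. FO (PiO C X)) (\<lambda>X Y f. FA (PiO C X) (PiO C Y) (PiA C X Y f))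
                (\<lambda>X. PiO D (FO X)) (\<lambda>X Y f. PiA D (FO X) (FO Y) (FA X Y f)) alpha \<and>
    (\<forall>X\<in>Ob C.
       Cmp D (FO (PiO C (PiO C X))) (PiO D (PiO D (FO X))) (FO X)
         (Xi D (FO X))
         (Cmp D (FO (PiO C (PiO C X))) (PiO D (FO (PiO C X))) (PiO D (PiO D (FO X)))
            (PiA D (FO (PiO C X)) (PiO D (FO X)) (alpha X))
            (alpha (PiO C X)))
       = FA (PiO C (PiO C X)) X (Xi C X))"

definition super_equivalence where
  "super_equivalence C D FO FA alpha \<longleftrightarrow>
     superfunctor C D FO FA alpha \<and> equivalence C D FO FA"

definition ct :: "('o, 'm, 'k::comm_ring_1) scat \<Rightarrow> ('o \<times> 'm, 'm, 'k) scat" where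
  "ct C = \<lparr>
     Ob = {(X, \<phi>). X \<in> Ob C \<and> iso C (PiO C X) X \<phi> \<and>
                    Cmp C (PiO C (PiO C X)) (PiO C X) X \<phi> (PiA C (PiO C X) X \<phi>) = Xi C X},
     Hom = (\<lambda>(X, \<phi>) (X', \<phi>'). {f \<in> Hom C X X'.
              Cmp C (PiO C X) X X' f \<phi> = Cmp C (PiO C X) (PiO C X') X' \<phi>' (PiA C X X' f)}),
     Cmp = (\<lambda>A B D g f. Cmp C (fst A) (fst B) (fst D) g f),
     Id = (\<lambda>A. Id C (fst A)),
     Add = (\<lambda>A B f g. Add C (fst A) (fst B) f g),
     Zero = (\<lambda>A B. Zero C (fst A) (fst B)),
     Smul = (\<lambda>A B a f. Smul C (fst A) (fst B) a f),
     PiO = (\<lambda>(X, \<phi>). (X, Smul C (PiO C X) X (-1) \<phi>)),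
     PiA = (\<lambda>A B f. f),
     Xi = (\<lambda>A. Id C (fst A)) \<rparr>"

end

theory Submission
  imports Defs
begin

text \<open>The comparison functor \<open>F : C \<rightarrow> (C\<^sup>c\<^sup>t)\<^sup>c\<^sup>t\<close> sends \<open>X\<close> to \<open>X \<oplus> \<Pi>X\<close>, whose odd
  isomorphism swaps the two summands and whose grading is \<open>1 \<oplus> -1\<close>; the summand swap
  \<open>F(\<Pi>X) \<cong> \<Pi>(F X)\<close> makes it a superfunctor. All identities are checked entrywise on biproducts.
  \<open>F\<close> is faithful, and full because \<open>2\<close> is invertible: a morphism \<open>F X \<rightarrow> F Y\<close> commutes with the
  gradings, so its off-diagonal entries equal their own negatives. It is essentially surjective because
  \<open>C\<close> is idempotent complete: an object \<open>((Y, \<phi>), \<psi>)\<close> splits along the idempotent \<open>(1 + \<psi>)/2\<close> as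
  \<open>K \<oplus> \<Pi>K\<close>, since \<open>\<phi>\<close>, anticommuting with \<open>\<psi>\<close>, exchanges the two eigenspaces of \<open>\<psi>\<close>.\<close>

section \<open>Categories and equivalences\<close>

locale cat =
  fixes D :: "('o, 'm, 'k, 'z) lcat_scheme"
  assumes category: "category D"
begin

lemma id_hom[simp]: "X \<in> Ob D \<Longrightarrow> Id D X \<in> Hom D X X"
  using category unfolding category_def by blast

lemma cmp_hom[simp]:
  "X \<in> Ob D \<Longrightarrow> Y \<in> Ob D \<Longrightarrow> Z \<in> Ob D \<Longrightarrow> f \<in> Hom D X Y \<Longrightarrow> g \<in> Hom D Y Z \<Longrightarrow>
   Cmp D X Y Z g f \<in> Hom D X Z"
  using category unfolding category_def by blast

lemma cmp_id_left[simp]: "X \<in> Ob D \<Longrightarrow> Y \<in> Ob D \<Longrightarrow> f \<in> Hom D X Y \<Longrightarrow> Cmp D X Y Y (Id D Y) f = f"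
  using category unfolding category_def by blast

lemma cmp_id_right[simp]: "X \<in> Ob D \<Longrightarrow> Y \<in> Ob D \<Longrightarrow> f \<in> Hom D X Y \<Longrightarrow> Cmp D X X Y f (Id D X) = f"
  using category unfolding category_def by blast

lemma cmp_assoc[simp]:
  "W \<in> Ob D \<Longrightarrow> X \<in> Ob D \<Longrightarrow> Y \<in> Ob D \<Longrightarrow> Z \<in> Ob D \<Longrightarrow>
   f \<in> Hom D W X \<Longrightarrow> g \<in> Hom D X Y \<Longrightarrow> h \<in> Hom D Y Z \<Longrightarrow>
   Cmp D W X Z (Cmp D X Y Z h g) f = Cmp D W Y Z h (Cmp D W X Y g f)"
  using category unfolding category_def by metis

lemma cmp_inverse_cancel[simp]:
  "Cmp D X Y X g f = Id D X \<Longrightarrow> W \<in> Ob D \<Longrightarrow> X \<in> Ob D \<Longrightarrow> Y \<in> Ob D \<Longrightarrow>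
   f \<in> Hom D X Y \<Longrightarrow> g \<in> Hom D Y X \<Longrightarrow> h \<in> Hom D W X \<Longrightarrow> Cmp D W Y X g (Cmp D W X Y f h) = h"
  by (metis cmp_assoc cmp_id_left)

lemma cmp_absorb:
  "Cmp D X Y Y g f = f \<Longrightarrow> W \<in> Ob D \<Longrightarrow> X \<in> Ob D \<Longrightarrow> Y \<in> Ob D \<Longrightarrow>
   f \<in> Hom D X Y \<Longrightarrow> g \<in> Hom D Y Y \<Longrightarrow> h \<in> Hom D W X \<Longrightarrow>
   Cmp D W Y Y g (Cmp D W X Y f h) = Cmp D W X Y f h"
  by (metis cmp_assoc)

end

lemma functor_onD:
  assumes "functor_on C D FO FA"
  shows "X \<in> Ob C \<Longrightarrow> FO X \<in> Ob D"
    and "X \<in> Ob C \<Longrightarrow> Y \<in> Ob C \<Longrightarrow> f \<in> Hom C X Y \<Longrightarrow> FA X Y f \<in> Hom D (FO X) (FO Y)"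
    and "X \<in> Ob C \<Longrightarrow> FA X X (Id C X) = Id D (FO X)"
    and "X \<in> Ob C \<Longrightarrow> Y \<in> Ob C \<Longrightarrow> Z \<in> Ob C \<Longrightarrow> f \<in> Hom C X Y \<Longrightarrow> g \<in> Hom C Y Z \<Longrightarrow>
       FA X Z (Cmp C X Y Z g f) = Cmp D (FO X) (FO Y) (FO Z) (FA Y Z g) (FA X Y f)"
  using assms unfolding functor_on_def by blast+

lemma iso_inverse_choice:
  assumes "\<And>A. A \<in> Ob D \<Longrightarrow> \<exists>X\<in>Ob C. \<exists>u. iso D (FO X) A u"
  obtains GO e e' where "\<And>A. A \<in> Ob D \<Longrightarrow> GO A \<in> Ob C \<and> e A \<in> Hom D (FO (GO A)) A \<and>
      e' A \<in> Hom D A (FO (GO A)) \<and> Cmp D (FO (GO A)) A (FO (GO A)) (e' A) (e A) = Id D (FO (GO A)) \<and>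
      Cmp D A (FO (GO A)) A (e A) (e' A) = Id D A"
proof -
  define Q where "Q A X u u' \<longleftrightarrow> X \<in> Ob C \<and> u \<in> Hom D (FO X) A \<and> u' \<in> Hom D A (FO X) \<and>
      Cmp D (FO X) A (FO X) u' u = Id D (FO X) \<and> Cmp D A (FO X) A u u' = Id D A" for A X u u'
  have "\<exists>t. A \<in> Ob D \<longrightarrow> Q A (fst t) (fst (snd t)) (snd (snd t))" for A
  proof (cases "A \<in> Ob D")
    case True
    then obtain X u where "X \<in> Ob C" "iso D (FO X) A u" using assms by blast
    then have "Q A X u u'" if "u' \<in> Hom D A (FO X) \<and> Cmp D (FO X) A (FO X) u' u = Id D (FO X) \<and>
        Cmp D A (FO X) A u u' = Id D A" for u'
      using that unfolding Q_def iso_def by blast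
    with \<open>iso D (FO X) A u\<close> show ?thesis unfolding iso_def by force
  qed simp
  then obtain c where "\<And>A. A \<in> Ob D \<Longrightarrow> Q A (fst (c A)) (fst (snd (c A))) (snd (snd (c A)))"
    by metis
  then show ?thesis unfolding Q_def by (rule that)
qed

lemma full_preimage_choice:
  assumes "\<And>X Y g. X \<in> Ob C \<Longrightarrow> Y \<in> Ob C \<Longrightarrow> g \<in> Hom D (FO X) (FO Y) \<Longrightarrow> \<exists>f\<in>Hom C X Y. FA X Y f = g"
  obtains P where "\<And>X Y g. X \<in> Ob C \<Longrightarrow> Y \<in> Ob C \<Longrightarrow> g \<in> Hom D (FO X) (FO Y) \<Longrightarrow>
      P X Y g \<in> Hom C X Y \<and> FA X Y (P X Y g) = g"
proof -
  have "\<exists>f. X \<in> Ob C \<and> Y \<in> Ob C \<and> g \<in> Hom D (FO X) (FO Y) \<longrightarrow> f \<in> Hom C X Y \<and> FA X Y f = g"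
    for X Y g using assms by blast
  then obtain P where "\<And>X Y g. X \<in> Ob C \<and> Y \<in> Ob C \<and> g \<in> Hom D (FO X) (FO Y) \<longrightarrow>
      P X Y g \<in> Hom C X Y \<and> FA X Y (P X Y g) = g"
    by metis
  then show ?thesis using that by blast
qed

lemma equivalenceI_preimages:
  assumes "cat C" and "cat D"
    and F: "functor_on C D FO FA"
    and faithful: "\<And>X Y f g. X \<in> Ob C \<Longrightarrow> Y \<in> Ob C \<Longrightarrow> f \<in> Hom C X Y \<Longrightarrow> g \<in> Hom C X Y \<Longrightarrow>
                    FA X Y f = FA X Y g \<Longrightarrow> f = g"
    and e: "\<And>A. A \<in> Ob D \<Longrightarrow> GO A \<in> Ob C \<and> e A \<in> Hom D (FO (GO A)) A \<and>
      e' A \<in> Hom D A (FO (GO A)) \<and> Cmp D (FO (GO A)) A (FO (GO A)) (e' A) (e A) = Id D (FO (GO A)) \<and>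
      Cmp D A (FO (GO A)) A (e A) (e' A) = Id D A"
    and P: "\<And>X Y g. X \<in> Ob C \<Longrightarrow> Y \<in> Ob C \<Longrightarrow> g \<in> Hom D (FO X) (FO Y) \<Longrightarrow>
      P X Y g \<in> Hom C X Y \<and> FA X Y (P X Y g) = g"
  shows "equivalence C D FO FA"
proof -
  interpret C: cat C by fact
  interpret D: cat D by fact
  note [simp] = functor_onD[OF F]
  define GA where "GA A B g = P (GO A) (GO B) (Cmp D (FO (GO A)) B (FO (GO B)) (e' B) (Cmp D (FO (GO A)) A B g (e A)))"
    for A B g
  define \<eta> where "\<eta> X = P (GO (FO X)) X (e (FO X))" for X
  define \<eta>' where "\<eta>' X = P X (GO (FO X)) (e' (FO X))" for X
  note [simp] = e[THEN conjunct1] e[THEN conjunct2, THEN conjunct1] e[THEN conjunct2, THEN conjunct2, THEN conjunct1]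
    e[THEN conjunct2, THEN conjunct2, THEN conjunct2]
  have [simp]: "A \<in> Ob D \<Longrightarrow> B \<in> Ob D \<Longrightarrow> g \<in> Hom D A B \<Longrightarrow> GA A B g \<in> Hom C (GO A) (GO B)"
    and [simp]: "A \<in> Ob D \<Longrightarrow> B \<in> Ob D \<Longrightarrow> g \<in> Hom D A B \<Longrightarrow>
       FA (GO A) (GO B) (GA A B g) = Cmp D (FO (GO A)) B (FO (GO B)) (e' B) (Cmp D (FO (GO A)) A B g (e A))"
    and [simp]: "X \<in> Ob C \<Longrightarrow> \<eta> X \<in> Hom C (GO (FO X)) X"
    and [simp]: "X \<in> Ob C \<Longrightarrow> FA (GO (FO X)) X (\<eta> X) = e (FO X)"
    and [simp]: "X \<in> Ob C \<Longrightarrow> \<eta>' X \<in> Hom C X (GO (FO X))"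
    and [simp]: "X \<in> Ob C \<Longrightarrow> FA X (GO (FO X)) (\<eta>' X) = e' (FO X)" for A B g X
    unfolding GA_def \<eta>_def \<eta>'_def using P by simp_all
  have G: "functor_on D C GO GA"
    unfolding functor_on_def
  proof (intro conjI ballI)
    fix A assume "A \<in> Ob D"
    then show "GA A A (Id D A) = Id C (GO A)"
      by (intro faithful[of "GO A" "GO A"]) simp_all
  next
    fix A B E f g assume "A \<in> Ob D" "B \<in> Ob D" "E \<in> Ob D" "f \<in> Hom D A B" "g \<in> Hom D B E"
    then show "GA A E (Cmp D A B E g f) = Cmp C (GO A) (GO B) (GO E) (GA B E g) (GA A B f)"
      by (intro faithful[of "GO A" "GO E"]) simp_all
  qed simp_all
  have unit: "nat_iso C C (\<lambda>X. GO (FO X)) (\<lambda>X Y f. GA (FO X) (FO Y) (FA X Y f)) (\<lambda>X. X) (\<lambda>X Y f. f) \<eta>"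
    unfolding nat_iso_def iso_def
  proof (intro conjI ballI bexI)
    fix X assume "X \<in> Ob C"
    then show "Cmp C (GO (FO X)) X (GO (FO X)) (\<eta>' X) (\<eta> X) = Id C (GO (FO X))"
      by (intro faithful[of "GO (FO X)" "GO (FO X)"]) simp_all
    from \<open>X \<in> Ob C\<close> show "Cmp C X (GO (FO X)) X (\<eta> X) (\<eta>' X) = Id C X"
      by (intro faithful[of X X]) simp_all
  next
    fix X Y f assume "X \<in> Ob C" "Y \<in> Ob C" "f \<in> Hom C X Y"
    then show "Cmp C (GO (FO X)) X Y f (\<eta> X) =
               Cmp C (GO (FO X)) (GO (FO Y)) Y (\<eta> Y) (GA (FO X) (FO Y) (FA X Y f))"
      by (intro faithful[of "GO (FO X)" Y]) simp_all
  qed simp_all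
  have counit: "nat_iso D D (\<lambda>X. FO (GO X)) (\<lambda>X Y f. FA (GO X) (GO Y) (GA X Y f)) (\<lambda>X. X) (\<lambda>X Y f. f) e"
    unfolding nat_iso_def iso_def
  proof (intro conjI ballI)
    fix A assume "A \<in> Ob D"
    then show "\<exists>g\<in>Hom D A (FO (GO A)). Cmp D (FO (GO A)) A (FO (GO A)) g (e A) = Id D (FO (GO A)) \<and>
        Cmp D A (FO (GO A)) A (e A) g = Id D A"
      by (intro bexI[of _ "e' A"]) simp_all
  qed simp_all
  show ?thesis
    unfolding equivalence_def using F G unit counit by blast
qed

lemma equivalenceI_full_faithful:
  assumes "cat C" and "cat D"
    and F: "functor_on C D FO FA"
    and faithful: "\<And>X Y f g. X \<in> Ob C \<Longrightarrow> Y \<in> Ob C \<Longrightarrow> f \<in> Hom C X Y \<Longrightarrow> g \<in> Hom C X Y \<Longrightarrow>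
                    FA X Y f = FA X Y g \<Longrightarrow> f = g"
    and full: "\<And>X Y g. X \<in> Ob C \<Longrightarrow> Y \<in> Ob C \<Longrightarrow> g \<in> Hom D (FO X) (FO Y) \<Longrightarrow>
                 \<exists>f\<in>Hom C X Y. FA X Y f = g"
    and ess_surj: "\<And>A. A \<in> Ob D \<Longrightarrow> \<exists>X\<in>Ob C. \<exists>u. iso D (FO X) A u"
  shows "equivalence C D FO FA"
proof -
  obtain GO e e' where e: "\<And>A. A \<in> Ob D \<Longrightarrow> GO A \<in> Ob C \<and> e A \<in> Hom D (FO (GO A)) A \<and>
      e' A \<in> Hom D A (FO (GO A)) \<and> Cmp D (FO (GO A)) A (FO (GO A)) (e' A) (e A) = Id D (FO (GO A)) \<and>
      Cmp D A (FO (GO A)) A (e A) (e' A) = Id D A"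
    using iso_inverse_choice[OF ess_surj] by blast
  obtain P where P: "\<And>X Y g. X \<in> Ob C \<Longrightarrow> Y \<in> Ob C \<Longrightarrow> g \<in> Hom D (FO X) (FO Y) \<Longrightarrow>
      P X Y g \<in> Hom C X Y \<and> FA X Y (P X Y g) = g"
    using full_preimage_choice[OF full] by blast
  show ?thesis
    by (rule equivalenceI_preimages[OF assms(1-4) e P])
qed

section \<open>Linear categories and biproducts\<close>

definition is_biproduct :: "('o, 'm, 'k, 'z) lcat_scheme \<Rightarrow> 'o \<Rightarrow> 'o \<Rightarrow> 'o \<Rightarrow> 'm \<Rightarrow> 'm \<Rightarrow> 'm \<Rightarrow> 'm \<Rightarrow> bool" where
  "is_biproduct D S A B p1 p2 i1 i2 \<longleftrightarrow> S \<in> Ob D \<and> p1 \<in> Hom D S A \<and> p2 \<in> Hom D S B \<and>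
     i1 \<in> Hom D A S \<and> i2 \<in> Hom D B S \<and>
     Cmp D A S A p1 i1 = Id D A \<and> Cmp D B S B p2 i2 = Id D B \<and>
     Cmp D B S A p1 i2 = Zero D B A \<and> Cmp D A S B p2 i1 = Zero D A B \<and>
     Add D S S (Cmp D S A S i1 p1) (Cmp D S B S i2 p2) = Id D S"

locale klinear_cat = cat D for D :: "('o, 'm, 'k::comm_ring_1, 'z) lcat_scheme" +
  assumes klinear: "klinear D"
begin

lemma zero_hom[simp]: "X \<in> Ob D \<Longrightarrow> Y \<in> Ob D \<Longrightarrow> Zero D X Y \<in> Hom D X Y"
  using klinear unfolding klinear_def by blast

lemma add_hom[simp]:
  "X \<in> Ob D \<Longrightarrow> Y \<in> Ob D \<Longrightarrow> f \<in> Hom D X Y \<Longrightarrow> g \<in> Hom D X Y \<Longrightarrow> Add D X Y f g \<in> Hom D X Y"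
  using klinear unfolding klinear_def by meson

lemma smul_hom[simp]: "X \<in> Ob D \<Longrightarrow> Y \<in> Ob D \<Longrightarrow> f \<in> Hom D X Y \<Longrightarrow> Smul D X Y a f \<in> Hom D X Y"
  using klinear unfolding klinear_def by meson

lemma add_assoc:
  "X \<in> Ob D \<Longrightarrow> Y \<in> Ob D \<Longrightarrow> f \<in> Hom D X Y \<Longrightarrow> g \<in> Hom D X Y \<Longrightarrow> h \<in> Hom D X Y \<Longrightarrow>
   Add D X Y (Add D X Y f g) h = Add D X Y f (Add D X Y g h)"
  using klinear unfolding klinear_def by meson

lemma add_commute:
  "X \<in> Ob D \<Longrightarrow> Y \<in> Ob D \<Longrightarrow> f \<in> Hom D X Y \<Longrightarrow> g \<in> Hom D X Y \<Longrightarrow> Add D X Y f g = Add D X Y g f"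
  using klinear unfolding klinear_def by meson

lemma add_zero_left[simp]: "X \<in> Ob D \<Longrightarrow> Y \<in> Ob D \<Longrightarrow> f \<in> Hom D X Y \<Longrightarrow> Add D X Y (Zero D X Y) f = f"
  using klinear unfolding klinear_def by meson

lemma add_zero_right[simp]: "X \<in> Ob D \<Longrightarrow> Y \<in> Ob D \<Longrightarrow> f \<in> Hom D X Y \<Longrightarrow> Add D X Y f (Zero D X Y) = f"
  by (metis add_commute add_zero_left zero_hom)

lemma smul_add:
  "X \<in> Ob D \<Longrightarrow> Y \<in> Ob D \<Longrightarrow> f \<in> Hom D X Y \<Longrightarrow> g \<in> Hom D X Y \<Longrightarrow>
   Smul D X Y a (Add D X Y f g) = Add D X Y (Smul D X Y a f) (Smul D X Y a g)"
  using klinear unfolding klinear_def by meson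

lemma add_smul:
  "X \<in> Ob D \<Longrightarrow> Y \<in> Ob D \<Longrightarrow> f \<in> Hom D X Y \<Longrightarrow>
   Smul D X Y (a + b) f = Add D X Y (Smul D X Y a f) (Smul D X Y b f)"
  using klinear unfolding klinear_def by meson

lemma smul_smul[simp]:
  "X \<in> Ob D \<Longrightarrow> Y \<in> Ob D \<Longrightarrow> f \<in> Hom D X Y \<Longrightarrow> Smul D X Y a (Smul D X Y b f) = Smul D X Y (a * b) f"
  using klinear unfolding klinear_def by metis

lemma smul_one[simp]: "X \<in> Ob D \<Longrightarrow> Y \<in> Ob D \<Longrightarrow> f \<in> Hom D X Y \<Longrightarrow> Smul D X Y 1 f = f"
  using klinear unfolding klinear_def by meson

lemma cmp_add_right[simp]:
  "X \<in> Ob D \<Longrightarrow> Y \<in> Ob D \<Longrightarrow> Z \<in> Ob D \<Longrightarrow> f \<in> Hom D X Y \<Longrightarrow> f' \<in> Hom D X Y \<Longrightarrow> g \<in> Hom D Y Z \<Longrightarrow>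
   Cmp D X Y Z g (Add D X Y f f') = Add D X Z (Cmp D X Y Z g f) (Cmp D X Y Z g f')"
  using klinear unfolding klinear_def by meson

lemma cmp_add_left[simp]:
  "X \<in> Ob D \<Longrightarrow> Y \<in> Ob D \<Longrightarrow> Z \<in> Ob D \<Longrightarrow> f \<in> Hom D X Y \<Longrightarrow> g \<in> Hom D Y Z \<Longrightarrow> g' \<in> Hom D Y Z \<Longrightarrow>
   Cmp D X Y Z (Add D Y Z g g') f = Add D X Z (Cmp D X Y Z g f) (Cmp D X Y Z g' f)"
  using klinear unfolding klinear_def by meson

lemma cmp_smul_right[simp]:
  "X \<in> Ob D \<Longrightarrow> Y \<in> Ob D \<Longrightarrow> Z \<in> Ob D \<Longrightarrow> f \<in> Hom D X Y \<Longrightarrow> g \<in> Hom D Y Z \<Longrightarrow>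
   Cmp D X Y Z g (Smul D X Y a f) = Smul D X Z a (Cmp D X Y Z g f)"
  using klinear unfolding klinear_def by meson

lemma cmp_smul_left[simp]:
  "X \<in> Ob D \<Longrightarrow> Y \<in> Ob D \<Longrightarrow> Z \<in> Ob D \<Longrightarrow> f \<in> Hom D X Y \<Longrightarrow> g \<in> Hom D Y Z \<Longrightarrow>
   Cmp D X Y Z (Smul D Y Z a g) f = Smul D X Z a (Cmp D X Y Z g f)"
  using klinear unfolding klinear_def by meson

lemma add_left_cancel:
  assumes "X \<in> Ob D" "Y \<in> Ob D" "f \<in> Hom D X Y" "g \<in> Hom D X Y" "g' \<in> Hom D X Y"
    and "Add D X Y f g = Add D X Y f g'"
  shows "g = g'"
proof -
  obtain n where n: "n \<in> Hom D X Y" "Add D X Y f n = Zero D X Y"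
    using klinear assms(1-3) unfolding klinear_def by meson
  have "g = Add D X Y n (Add D X Y f g)" using assms n by (metis add_assoc add_commute add_zero_left)
  also have "\<dots> = Add D X Y n (Add D X Y f g')" using assms by simp
  also have "\<dots> = g'" using assms n by (metis add_assoc add_commute add_zero_left)
  finally show ?thesis .
qed

lemma add_self_eq_self: "X \<in> Ob D \<Longrightarrow> Y \<in> Ob D \<Longrightarrow> f \<in> Hom D X Y \<Longrightarrow> Add D X Y f f = f \<Longrightarrow> f = Zero D X Y"
  by (metis add_left_cancel zero_hom add_zero_right)

lemma cmp_zero_right[simp]:
  "X \<in> Ob D \<Longrightarrow> Y \<in> Ob D \<Longrightarrow> Z \<in> Ob D \<Longrightarrow> g \<in> Hom D Y Z \<Longrightarrow> Cmp D X Y Z g (Zero D X Y) = Zero D X Z"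
  by (rule add_self_eq_self) (simp_all flip: cmp_add_right)

lemma cmp_zero_left[simp]:
  "X \<in> Ob D \<Longrightarrow> Y \<in> Ob D \<Longrightarrow> Z \<in> Ob D \<Longrightarrow> f \<in> Hom D X Y \<Longrightarrow> Cmp D X Y Z (Zero D Y Z) f = Zero D X Z"
  by (rule add_self_eq_self) (simp_all flip: cmp_add_left)

lemma smul_zero[simp]: "X \<in> Ob D \<Longrightarrow> Y \<in> Ob D \<Longrightarrow> Smul D X Y a (Zero D X Y) = Zero D X Y"
  by (rule add_self_eq_self) (simp_all flip: smul_add)

lemma zero_smul[simp]: "X \<in> Ob D \<Longrightarrow> Y \<in> Ob D \<Longrightarrow> f \<in> Hom D X Y \<Longrightarrow> Smul D X Y 0 f = Zero D X Y"
  by (rule add_self_eq_self) (simp_all flip: add_smul)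

lemma add_neg[simp]:
  assumes "X \<in> Ob D" "Y \<in> Ob D" "f \<in> Hom D X Y"
  shows "Add D X Y f (Smul D X Y (-1) f) = Zero D X Y"
  using add_smul[OF assms, of 1 "-1"] assms by simp

lemma neg_unique:
  "X \<in> Ob D \<Longrightarrow> Y \<in> Ob D \<Longrightarrow> f \<in> Hom D X Y \<Longrightarrow> g \<in> Hom D X Y \<Longrightarrow>
   Add D X Y f g = Zero D X Y \<Longrightarrow> g = Smul D X Y (-1) f"
  by (metis add_left_cancel add_neg smul_hom)

lemma cmp_eq_zero_cancel[simp]:
  "Cmp D X Y Z g f = Zero D X Z \<Longrightarrow> W \<in> Ob D \<Longrightarrow> X \<in> Ob D \<Longrightarrow> Y \<in> Ob D \<Longrightarrow> Z \<in> Ob D \<Longrightarrow>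
   f \<in> Hom D X Y \<Longrightarrow> g \<in> Hom D Y Z \<Longrightarrow> h \<in> Hom D W X \<Longrightarrow> Cmp D W Y Z g (Cmp D W X Y f h) = Zero D W Z"
  by (metis cmp_assoc cmp_zero_left)

lemma biproduct_eq_via_injections:
  assumes "is_biproduct D S A B p1 p2 i1 i2" "A \<in> Ob D" "B \<in> Ob D" "T \<in> Ob D"
    and "u \<in> Hom D S T" "v \<in> Hom D S T"
    and "Cmp D A S T u i1 = Cmp D A S T v i1" "Cmp D B S T u i2 = Cmp D B S T v i2"
  shows "u = v"
proof -
  have S: "S \<in> Ob D" "p1 \<in> Hom D S A" "p2 \<in> Hom D S B" "i1 \<in> Hom D A S" "i2 \<in> Hom D B S"
    and sum: "Add D S S (Cmp D S A S i1 p1) (Cmp D S B S i2 p2) = Id D S"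
    using assms(1) unfolding is_biproduct_def by auto
  have "u = Cmp D S S T u (Add D S S (Cmp D S A S i1 p1) (Cmp D S B S i2 p2))"
    using sum S assms by simp
  also have "\<dots> = Add D S T (Cmp D S A T (Cmp D A S T u i1) p1) (Cmp D S B T (Cmp D B S T u i2) p2)"
    using S assms(2-6) by simp
  also have "\<dots> = Add D S T (Cmp D S A T (Cmp D A S T v i1) p1) (Cmp D S B T (Cmp D B S T v i2) p2)"
    using assms by simp
  also have "\<dots> = Cmp D S S T v (Add D S S (Cmp D S A S i1 p1) (Cmp D S B S i2 p2))"
    using S assms(2-6) by simp
  also have "\<dots> = v"
    using sum S assms by simp
  finally show ?thesis .
qed

lemma biproduct_eq_via_projections:
  assumes "is_biproduct D S A B p1 p2 i1 i2" "A \<in> Ob D" "B \<in> Ob D" "T \<in> Ob D"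
    and "u \<in> Hom D T S" "v \<in> Hom D T S"
    and "Cmp D T S A p1 u = Cmp D T S A p1 v" "Cmp D T S B p2 u = Cmp D T S B p2 v"
  shows "u = v"
proof -
  have S: "S \<in> Ob D" "p1 \<in> Hom D S A" "p2 \<in> Hom D S B" "i1 \<in> Hom D A S" "i2 \<in> Hom D B S"
    and sum: "Add D S S (Cmp D S A S i1 p1) (Cmp D S B S i2 p2) = Id D S"
    using assms(1) unfolding is_biproduct_def by auto
  have "u = Cmp D T S S (Add D S S (Cmp D S A S i1 p1) (Cmp D S B S i2 p2)) u"
    using sum S assms by simp
  also have "\<dots> = Add D T S (Cmp D T A S i1 (Cmp D T S A p1 u)) (Cmp D T B S i2 (Cmp D T S B p2 u))"
    using S assms(2-6) by simp
  also have "\<dots> = Add D T S (Cmp D T A S i1 (Cmp D T S A p1 v)) (Cmp D T B S i2 (Cmp D T S B p2 v))"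
    using assms by simp
  also have "\<dots> = Cmp D T S S (Add D S S (Cmp D S A S i1 p1) (Cmp D S B S i2 p2)) v"
    using S assms(2-6) by simp
  also have "\<dots> = v"
    using sum S assms by simp
  finally show ?thesis .
qed

lemma biproduct_hom_eq:
  assumes S: "is_biproduct D S A B p1 p2 i1 i2" and T: "is_biproduct D T A' B' q1 q2 j1 j2"
    and ob: "A \<in> Ob D" "B \<in> Ob D" "A' \<in> Ob D" "B' \<in> Ob D" and uv: "u \<in> Hom D S T" "v \<in> Hom D S T"
    and "Cmp D A T A' q1 (Cmp D A S T u i1) = Cmp D A T A' q1 (Cmp D A S T v i1)"
    and "Cmp D A T B' q2 (Cmp D A S T u i1) = Cmp D A T B' q2 (Cmp D A S T v i1)"
    and "Cmp D B T A' q1 (Cmp D B S T u i2) = Cmp D B T A' q1 (Cmp D B S T v i2)"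
    and "Cmp D B T B' q2 (Cmp D B S T u i2) = Cmp D B T B' q2 (Cmp D B S T v i2)"
  shows "u = v"
proof -
  have S': "S \<in> Ob D" "i1 \<in> Hom D A S" "i2 \<in> Hom D B S" "T \<in> Ob D"
    using S T unfolding is_biproduct_def by auto
  show ?thesis
  proof (rule biproduct_eq_via_injections[OF S ob(1,2) S'(4) uv])
    show "Cmp D A S T u i1 = Cmp D A S T v i1"
      by (rule biproduct_eq_via_projections[OF T ob(3,4) ob(1)]) (use S' assms in simp_all)
    show "Cmp D B S T u i2 = Cmp D B S T v i2"
      by (rule biproduct_eq_via_projections[OF T ob(3,4) ob(2)]) (use S' assms in simp_all)
  qed
qed

lemma add_self_add:
  "X \<in> Ob D \<Longrightarrow> Y \<in> Ob D \<Longrightarrow> a \<in> Hom D X Y \<Longrightarrow> b \<in> Hom D X Y \<Longrightarrow>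
   Add D X Y (Add D X Y a b) (Add D X Y a b) = Add D X Y (Add D X Y a a) (Add D X Y b b)"
  by (metis add_assoc add_commute add_hom)

lemma add_add_neg:
  assumes "X \<in> Ob D" "Y \<in> Ob D" "a \<in> Hom D X Y" "b \<in> Hom D X Y"
  shows "Add D X Y (Add D X Y a b) (Add D X Y a (Smul D X Y (-1) b)) = Add D X Y a a"
proof -
  have "Add D X Y (Add D X Y a b) (Add D X Y a (Smul D X Y (-1) b)) =
        Add D X Y a (Add D X Y a (Add D X Y b (Smul D X Y (-1) b)))"
    using assms by (metis add_assoc add_commute add_hom smul_hom)
  then show ?thesis using assms by simp
qed

lemma add_self_cancel:
  assumes two: "(2::'k) dvd 1" and X: "X \<in> Ob D" "Y \<in> Ob D" and x: "x \<in> Hom D X Y" "y \<in> Hom D X Y"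
    and xy: "Add D X Y x x = Add D X Y y y"
  shows "x = y"
proof -
  obtain h :: 'k where "1 = 2 * h" using two by (auto elim: dvdE)
  then have hh: "h + h = 1" by (metis mult_2)
  have half: "Smul D X Y h (Add D X Y z z) = z" if "z \<in> Hom D X Y" for z
  proof -
    have "Smul D X Y h (Add D X Y z z) = Smul D X Y (h + h) z"
      by (simp only: smul_add[OF X that that] add_smul[OF X that])
    then show ?thesis using hh smul_one[OF X that] by argo
  qed
  show ?thesis using half[OF x(1)] half[OF x(2)] xy by metis
qed

lemma add_self_eq_zero:
  "(2::'k) dvd 1 \<Longrightarrow> X \<in> Ob D \<Longrightarrow> Y \<in> Ob D \<Longrightarrow> x \<in> Hom D X Y \<Longrightarrow>
   Add D X Y x x = Zero D X Y \<Longrightarrow> x = Zero D X Y"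
  using add_self_cancel[of X Y x "Zero D X Y"] by simp

lemma eq_neg_self_zero:
  "(2::'k) dvd 1 \<Longrightarrow> X \<in> Ob D \<Longrightarrow> Y \<in> Ob D \<Longrightarrow> x \<in> Hom D X Y \<Longrightarrow>
   x = Smul D X Y (-1) x \<Longrightarrow> x = Zero D X Y"
  by (metis add_neg add_self_eq_zero)

lemma involution_idempotent:
  assumes two: "(2::'k) dvd 1" and Y: "Y \<in> Ob D" and \<psi>: "\<psi> \<in> Hom D Y Y" "Cmp D Y Y Y \<psi> \<psi> = Id D Y"
  obtains e where "e \<in> Hom D Y Y" "Add D Y Y e e = Add D Y Y (Id D Y) \<psi>"
    "Cmp D Y Y Y \<psi> e = e" "Cmp D Y Y Y e e = e"
proof -
  obtain h :: 'k where "1 = 2 * h" using two by (auto elim: dvdE)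
  then have hh: "h + h = 1" by (metis mult_2)
  define e where "e = Smul D Y Y h (Add D Y Y (Id D Y) \<psi>)"
  have e: "e \<in> Hom D Y Y" unfolding e_def using Y \<psi> by simp
  have ee: "Add D Y Y e e = Add D Y Y (Id D Y) \<psi>"
    unfolding e_def using add_smul[of Y Y _ h h, symmetric] Y \<psi> hh by simp
  have "Add D Y Y (Cmp D Y Y Y \<psi> e) (Cmp D Y Y Y \<psi> e) = Cmp D Y Y Y \<psi> (Add D Y Y e e)"
    using Y \<psi> e by simp
  also have "\<dots> = Add D Y Y \<psi> (Id D Y)"
    using ee Y \<psi> by simp
  finally have "Add D Y Y (Cmp D Y Y Y \<psi> e) (Cmp D Y Y Y \<psi> e) = Add D Y Y e e"
    using ee Y \<psi> add_commute by simp
  then have \<psi>e: "Cmp D Y Y Y \<psi> e = e"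
    using add_self_cancel[OF two Y Y _ e] Y \<psi> e by simp
  have "Add D Y Y (Cmp D Y Y Y e e) (Cmp D Y Y Y e e) = Cmp D Y Y Y (Add D Y Y e e) e"
    using Y e by simp
  also have "\<dots> = Add D Y Y e e"
    using ee \<psi>e Y \<psi> e by simp
  finally have "Add D Y Y (Cmp D Y Y Y e e) (Cmp D Y Y Y e e) = Add D Y Y e e" .
  then have "Cmp D Y Y Y e e = e"
    using add_self_cancel[OF two Y Y _ e] Y e by simp
  with e ee \<psi>e show ?thesis by (rule that)
qed

lemma idempotent_splits:
  assumes ic: "idem_complete D" and Y: "Y \<in> Ob D" and e: "e \<in> Hom D Y Y" "Cmp D Y Y Y e e = e"
  obtains K k r where "K \<in> Ob D" "k \<in> Hom D K Y" "r \<in> Hom D Y K"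
    "Cmp D K Y K r k = Id D K" "Cmp D Y K Y k r = e"
proof -
  define p where "p = Add D Y Y (Id D Y) (Smul D Y Y (-1) e)"
  have p: "p \<in> Hom D Y Y" unfolding p_def using Y e by simp
  have pe: "Cmp D Y Y Y p e = Zero D Y Y" unfolding p_def using Y e by simp
  have ep: "Add D Y Y e p = Id D Y" unfolding p_def
    using Y e by (metis add_assoc add_commute add_neg id_hom smul_hom add_zero_right)
  have "Cmp D Y Y Y p p = p" unfolding p_def using Y e by simp
  then obtain K k where "is_kernel D Y Y p K k"
    using ic Y p unfolding idem_complete_def by blast
  then have K: "K \<in> Ob D" "k \<in> Hom D K Y" and pk: "Cmp D K Y Y p k = Zero D K Y"
    and univ: "\<And>W f. W \<in> Ob D \<Longrightarrow> f \<in> Hom D W Y \<Longrightarrow> Cmp D W Y Y p f = Zero D W Y \<Longrightarrow>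
        \<exists>g\<in>Hom D W K. Cmp D W K Y k g = f \<and> (\<forall>g'\<in>Hom D W K. Cmp D W K Y k g' = f \<longrightarrow> g' = g)"
    unfolding is_kernel_def by auto
  have "k = Cmp D K Y Y (Add D Y Y e p) k" using ep K Y by simp
  then have ek: "Cmp D K Y Y e k = k" using pk K Y e p by simp
  obtain r where r: "r \<in> Hom D Y K" and kr: "Cmp D Y K Y k r = e"
    using univ[OF Y e(1) pe] by auto
  obtain g where "\<forall>g'\<in>Hom D K K. Cmp D K K Y k g' = k \<longrightarrow> g' = g"
    using univ[OF K pk] by auto
  moreover have "Cmp D K K Y k (Cmp D K Y K r k) = k"
    using kr ek K Y r e by (metis cmp_assoc)
  ultimately have "Cmp D K Y K r k = Id D K" using K Y r by (metis cmp_hom id_hom cmp_id_right)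
  from K r this kr show ?thesis by (rule that)
qed

end

section \<open>Supercategories\<close>

locale supercat =
  fixes C :: "('o, 'm, 'k::comm_ring_1) scat"
  assumes supercategory: "supercategory C"
begin

sublocale klinear_cat C
  using supercategory unfolding supercategory_def additive_def by unfold_locales blast+

abbreviation "Po \<equiv> PiO C"
abbreviation "Pa \<equiv> PiA C"

lemma pi_functor: "functor_on C C Po Pa"
  using supercategory unfolding supercategory_def by blast

lemmas pi_ob[simp] = functor_onD(1)[OF pi_functor]
  and pi_hom[simp] = functor_onD(2)[OF pi_functor]
  and pi_id[simp] = functor_onD(3)[OF pi_functor]
  and pi_cmp[simp] = functor_onD(4)[OF pi_functor]

lemma pi_xi[simp]: "X \<in> Ob C \<Longrightarrow> Pa (Po (Po X)) X (Xi C X) = Xi C (Po X)"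
  using supercategory unfolding supercategory_def by simp

lemma xi_iso: "X \<in> Ob C \<Longrightarrow> iso C (Po (Po X)) X (Xi C X)"
  using supercategory unfolding supercategory_def nat_iso_def by blast

lemma xi_hom[simp]: "X \<in> Ob C \<Longrightarrow> Xi C X \<in> Hom C (Po (Po X)) X"
  using xi_iso unfolding iso_def by blast

lemma xi_natural:
  "X \<in> Ob C \<Longrightarrow> Y \<in> Ob C \<Longrightarrow> f \<in> Hom C X Y \<Longrightarrow>
   Cmp C (Po (Po X)) X Y f (Xi C X) = Cmp C (Po (Po X)) (Po (Po Y)) Y (Xi C Y) (Pa (Po X) (Po Y) (Pa X Y f))"
  using supercategory unfolding supercategory_def nat_iso_def by blast

lemma xi_natural_cmp:
  "X \<in> Ob C \<Longrightarrow> Y \<in> Ob C \<Longrightarrow> W \<in> Ob C \<Longrightarrow> f \<in> Hom C X Y \<Longrightarrow> h \<in> Hom C W (Po (Po X)) \<Longrightarrow>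
   Cmp C W X Y f (Cmp C W (Po (Po X)) X (Xi C X) h) =
   Cmp C W (Po (Po Y)) Y (Xi C Y) (Cmp C W (Po (Po X)) (Po (Po Y)) (Pa (Po X) (Po Y) (Pa X Y f)) h)"
  by (metis cmp_assoc xi_natural pi_ob pi_hom xi_hom)

definition xi_inv where
  "xi_inv X = (SOME g. g \<in> Hom C X (Po (Po X)) \<and>
     Cmp C (Po (Po X)) X (Po (Po X)) g (Xi C X) = Id C (Po (Po X)) \<and> Cmp C X (Po (Po X)) X (Xi C X) g = Id C X)"

lemma xi_inv:
  "X \<in> Ob C \<Longrightarrow> xi_inv X \<in> Hom C X (Po (Po X)) \<and>
     Cmp C (Po (Po X)) X (Po (Po X)) (xi_inv X) (Xi C X) = Id C (Po (Po X)) \<and>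
     Cmp C X (Po (Po X)) X (Xi C X) (xi_inv X) = Id C X"
  unfolding xi_inv_def by (rule someI_ex) (use xi_iso[unfolded iso_def] in blast)

lemma xi_inv_hom[simp]: "X \<in> Ob C \<Longrightarrow> xi_inv X \<in> Hom C X (Po (Po X))"
  and xi_inv_xi[simp]: "X \<in> Ob C \<Longrightarrow> Cmp C (Po (Po X)) X (Po (Po X)) (xi_inv X) (Xi C X) = Id C (Po (Po X))"
  and xi_xi_inv[simp]: "X \<in> Ob C \<Longrightarrow> Cmp C X (Po (Po X)) X (Xi C X) (xi_inv X) = Id C X"
  using xi_inv by blast+

lemma pi_faithful:
  assumes "X \<in> Ob C" "Y \<in> Ob C" "f \<in> Hom C X Y" "g \<in> Hom C X Y" and "Pa X Y f = Pa X Y g"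
  shows "f = g"
proof -
  have "f = Cmp C X (Po (Po X)) Y (Cmp C (Po (Po X)) X Y f (Xi C X)) (xi_inv X)"
    using assms by simp
  also have "\<dots> = Cmp C X (Po (Po X)) Y (Cmp C (Po (Po X)) X Y g (Xi C X)) (xi_inv X)"
    using assms by (simp only: xi_natural)
  also have "\<dots> = g" using assms by simp
  finally show ?thesis .
qed

lemma pi_full:
  assumes "X \<in> Ob C" "Y \<in> Ob C" "g \<in> Hom C (Po X) (Po Y)"
  shows "\<exists>h\<in>Hom C X Y. Pa X Y h = g"
proof
  let ?h = "Cmp C X (Po (Po Y)) Y (Xi C Y) (Cmp C X (Po (Po X)) (Po (Po Y)) (Pa (Po X) (Po Y) g) (xi_inv X))"
  show "?h \<in> Hom C X Y" using assms by simp
  have inv: "Cmp C (Po X) (Po (Po (Po X))) (Po X) (Xi C (Po X)) (Pa X (Po (Po X)) (xi_inv X)) = Id C (Po X)"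
    using assms by (metis pi_id pi_cmp pi_xi xi_xi_inv xi_inv_hom xi_hom pi_ob)
  have "Pa X Y ?h = Cmp C (Po X) (Po (Po (Po X))) (Po Y)
      (Cmp C (Po (Po (Po X))) (Po (Po (Po Y))) (Po Y) (Xi C (Po Y)) (Pa (Po (Po X)) (Po (Po Y)) (Pa (Po X) (Po Y) g)))
      (Pa X (Po (Po X)) (xi_inv X))"
    using assms by simp
  also have "\<dots> = Cmp C (Po X) (Po (Po (Po X))) (Po Y)
      (Cmp C (Po (Po (Po X))) (Po X) (Po Y) g (Xi C (Po X))) (Pa X (Po (Po X)) (xi_inv X))"
    using assms by (simp only: xi_natural pi_ob)
  also have "\<dots> = g" using assms inv by simp
  finally show "Pa X Y ?h = g" .
qed

lemma pi_zero[simp]: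
  assumes "X \<in> Ob C" "Y \<in> Ob C"
  shows "Pa X Y (Zero C X Y) = Zero C (Po X) (Po Y)"
proof -
  obtain h where h: "h \<in> Hom C X Y" "Pa X Y h = Zero C (Po X) (Po Y)"
    using pi_full[OF assms zero_hom] assms by auto
  have "Pa X Y (Zero C X Y) = Pa X Y (Cmp C X X Y h (Zero C X X))" using assms h by simp
  also have "\<dots> = Zero C (Po X) (Po Y)" using assms h by (simp del: cmp_zero_right)
  finally show ?thesis .
qed

lemma pi_cmp_eq_id[simp]:
  "Cmp C X Y X g f = Id C X \<Longrightarrow> X \<in> Ob C \<Longrightarrow> Y \<in> Ob C \<Longrightarrow> f \<in> Hom C X Y \<Longrightarrow> g \<in> Hom C Y X \<Longrightarrow>
   Cmp C (Po X) (Po Y) (Po X) (Pa Y X g) (Pa X Y f) = Id C (Po X)"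
  by (metis pi_cmp pi_id)

lemma pi_cmp_eq_zero[simp]:
  "Cmp C X Y Z g f = Zero C X Z \<Longrightarrow> X \<in> Ob C \<Longrightarrow> Y \<in> Ob C \<Longrightarrow> Z \<in> Ob C \<Longrightarrow>
   f \<in> Hom C X Y \<Longrightarrow> g \<in> Hom C Y Z \<Longrightarrow> Cmp C (Po X) (Po Y) (Po Z) (Pa Y Z g) (Pa X Y f) = Zero C (Po X) (Po Z)"
  by (metis pi_cmp pi_zero)

lemma pi_is_biproduct:
  assumes b: "is_biproduct C S A B p1 p2 i1 i2" and AB: "A \<in> Ob C" "B \<in> Ob C"
  shows "is_biproduct C (Po S) (Po A) (Po B) (Pa S A p1) (Pa S B p2) (Pa A S i1) (Pa B S i2)"
proof -
  have S: "S \<in> Ob C" "p1 \<in> Hom C S A" "p2 \<in> Hom C S B" "i1 \<in> Hom C A S" "i2 \<in> Hom C B S"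
    and r: "Cmp C A S A p1 i1 = Id C A" "Cmp C B S B p2 i2 = Id C B"
      "Cmp C B S A p1 i2 = Zero C B A" "Cmp C A S B p2 i1 = Zero C A B"
    and sum: "Add C S S (Cmp C S A S i1 p1) (Cmp C S B S i2 p2) = Id C S"
    using b unfolding is_biproduct_def by auto
  let ?E = "Add C (Po S) (Po S) (Cmp C (Po S) (Po A) (Po S) (Pa A S i1) (Pa S A p1))
     (Cmp C (Po S) (Po B) (Po S) (Pa B S i2) (Pa S B p2))"
  obtain e where e: "e \<in> Hom C S S" "Pa S S e = ?E"
    using pi_full[OF S(1) S(1)] S AB by (metis add_hom cmp_hom pi_hom pi_ob)
  have "Pa S A (Cmp C S S A p1 e) = Pa S A p1" using e S AB r by simp
  then have 1: "Cmp C S S A p1 e = p1" using pi_faithful S AB e by (meson cmp_hom)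
  have "Pa S B (Cmp C S S B p2 e) = Pa S B p2" using e S AB r by simp
  then have 2: "Cmp C S S B p2 e = p2" using pi_faithful S AB e by (meson cmp_hom)
  have "e = Cmp C S S S (Add C S S (Cmp C S A S i1 p1) (Cmp C S B S i2 p2)) e" using sum e S by simp
  also have "\<dots> = Add C S S (Cmp C S A S i1 (Cmp C S S A p1 e)) (Cmp C S B S i2 (Cmp C S S B p2 e))"
    using e S AB by simp
  also have "\<dots> = Id C S" using 1 2 sum by simp
  finally have "?E = Id C (Po S)" using e S by simp
  then show ?thesis using S AB r unfolding is_biproduct_def by simp
qed

lemma biproduct_exists:
  assumes "A \<in> Ob C" "B \<in> Ob C"
  shows "\<exists>S p1 p2 i1 i2. is_biproduct C S A B p1 p2 i1 i2"
proof -
  have "additive C" using supercategory unfolding supercategory_def by blast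
  with assms show ?thesis unfolding additive_def is_biproduct_def by metis
qed

text \<open>Additivity of \<open>\<Pi>\<close>: \<open>f + g\<close> factors as \<open>(f, g) \<circ> (1, 1)\<close> through \<open>X \<oplus> X\<close>, and \<open>\<Pi>\<close> preserves biproducts.\<close>

lemma pi_add[simp]:
  assumes X: "X \<in> Ob C" "Y \<in> Ob C" and f: "f \<in> Hom C X Y" "g \<in> Hom C X Y"
  shows "Pa X Y (Add C X Y f g) = Add C (Po X) (Po Y) (Pa X Y f) (Pa X Y g)"
proof -
  obtain S p1 p2 i1 i2 where b: "is_biproduct C S X X p1 p2 i1 i2"
    using biproduct_exists X by blast
  then have S: "S \<in> Ob C" "p1 \<in> Hom C S X" "p2 \<in> Hom C S X" "i1 \<in> Hom C X S" "i2 \<in> Hom C X S"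
    and r: "Cmp C X S X p1 i1 = Id C X" "Cmp C X S X p2 i2 = Id C X"
      "Cmp C X S X p1 i2 = Zero C X X" "Cmp C X S X p2 i1 = Zero C X X"
    unfolding is_biproduct_def by auto
  note pb = pi_is_biproduct[OF b X(1) X(1)]
  let ?d = "Add C X S i1 i2" and ?m = "Add C S Y (Cmp C S X Y f p1) (Cmp C S X Y g p2)"
  have dh: "?d \<in> Hom C X S" and mh: "?m \<in> Hom C S Y" using S X f by auto
  have Pm: "Pa S Y ?m = Add C (Po S) (Po Y) (Cmp C (Po S) (Po X) (Po Y) (Pa X Y f) (Pa S X p1))
      (Cmp C (Po S) (Po X) (Po Y) (Pa X Y g) (Pa S X p2))"
    by (rule biproduct_eq_via_injections[OF pb, where T="Po Y"])
      (use S r X f mh in \<open>simp_all del: pi_cmp add: pi_cmp[symmetric]\<close>)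
  have Pd: "Pa X S ?d = Add C (Po X) (Po S) (Pa X S i1) (Pa X S i2)"
    by (rule biproduct_eq_via_projections[OF pb, where T="Po X"])
      (use S r X f dh in \<open>simp_all del: pi_cmp add: pi_cmp[symmetric]\<close>)
  have "Add C X Y f g = Cmp C X S Y ?m ?d" using S r X f by simp
  then have "Pa X Y (Add C X Y f g) = Cmp C (Po X) (Po S) (Po Y) (Pa S Y ?m) (Pa X S ?d)"
    by (simp only: pi_cmp[OF X(1) S(1) X(2) dh mh])
  also have "\<dots> = Add C (Po X) (Po Y) (Pa X Y f) (Pa X Y g)"
    unfolding Pm Pd using S r X f by simp
  finally show ?thesis .
qed

lemma pi_neg[simp]:
  assumes X: "X \<in> Ob C" "Y \<in> Ob C" and f: "f \<in> Hom C X Y"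
  shows "Pa X Y (Smul C X Y (-1) f) = Smul C (Po X) (Po Y) (-1) (Pa X Y f)"
proof -
  have "Add C (Po X) (Po Y) (Pa X Y f) (Pa X Y (Smul C X Y (-1) f)) = Zero C (Po X) (Po Y)"
    using X f by (simp flip: pi_add)
  then show ?thesis using neg_unique X f by simp
qed

end

section \<open>The double Clifford twist\<close>

lemma ct_Ob:
  "(X, \<phi>) \<in> Ob (ct C) \<longleftrightarrow> X \<in> Ob C \<and> iso C (PiO C X) X \<phi> \<and>
     Cmp C (PiO C (PiO C X)) (PiO C X) X \<phi> (PiA C (PiO C X) X \<phi>) = Xi C X"
  unfolding ct_def by simp

lemma ct_Hom:
  "Hom (ct C) (X, \<phi>) (X', \<phi>') =
     {f \<in> Hom C X X'. Cmp C (PiO C X) X X' f \<phi> = Cmp C (PiO C X) (PiO C X') X' \<phi>' (PiA C X X' f)}"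
  unfolding ct_def by simp

lemma ct_Cmp[simp]: "Cmp (ct C) A B E g f = Cmp C (fst A) (fst B) (fst E) g f"
  and ct_Id[simp]: "Id (ct C) A = Id C (fst A)"
  and ct_Smul[simp]: "Smul (ct C) A B a f = Smul C (fst A) (fst B) a f"
  and ct_PiO[simp]: "PiO (ct C) (X, \<phi>) = (X, Smul C (PiO C X) X (-1) \<phi>)"
  and ct_PiA[simp]: "PiA (ct C) A B f = f"
  and ct_Xi[simp]: "Xi (ct C) A = Id C (fst A)"
  unfolding ct_def by simp_all

lemma ctct_Ob:
  "((X, \<phi>), \<psi>) \<in> Ob (ct (ct C)) \<longleftrightarrow>
     (X, \<phi>) \<in> Ob (ct C) \<and> iso (ct C) (X, Smul C (PiO C X) X (-1) \<phi>) (X, \<phi>) \<psi> \<and> Cmp C X X X \<psi> \<psi> = Id C X"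
  by (subst ct_def[of "ct C"]) (simp add: ct_def[of C])

lemma ctct_Hom:
  "f \<in> Hom (ct (ct C)) ((X, \<phi>), \<psi>) ((X', \<phi>'), \<psi>') \<longleftrightarrow>
     f \<in> Hom C X X' \<and> Cmp C (PiO C X) X X' f \<phi> = Cmp C (PiO C X) (PiO C X') X' \<phi>' (PiA C X X' f) \<and>
     Cmp C X X X' f \<psi> = Cmp C X X' X' \<psi>' f"
  by (subst ct_def[of "ct C"]) (simp add: ct_Hom)

lemma ctct_Cmp[simp]: "Cmp (ct (ct C)) A B E g f = Cmp C (fst (fst A)) (fst (fst B)) (fst (fst E)) g f"
  and ctct_Id[simp]: "Id (ct (ct C)) A = Id C (fst (fst A))"
  and ctct_PiO[simp]: "PiO (ct (ct C)) ((X, \<phi>), \<psi>) = ((X, \<phi>), Smul C X X (-1) \<psi>)"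
  and ctct_PiA[simp]: "PiA (ct (ct C)) A B f = f"
  and ctct_Xi[simp]: "Xi (ct (ct C)) A = Id C (fst (fst A))"
  by (simp_all add: ct_def[of "ct C"])

context supercat
begin

lemma ctct_ob_parts:
  "((X, \<phi>), \<psi>) \<in> Ob (ct (ct C)) \<Longrightarrow> X \<in> Ob C \<and> \<phi> \<in> Hom C (Po X) X \<and> \<psi> \<in> Hom C X X"
  unfolding ctct_Ob ct_Ob iso_def by (auto simp: ct_Hom)

lemma ctct_cmp_hom:
  assumes X: "X \<in> Ob C" "Y \<in> Ob C" "Z \<in> Ob C"
    and \<phi>: "\<phi> \<in> Hom C (Po X) X" "\<phi>' \<in> Hom C (Po Y) Y" "\<phi>'' \<in> Hom C (Po Z) Z"
    and \<psi>: "\<psi> \<in> Hom C X X" "\<psi>' \<in> Hom C Y Y" "\<psi>'' \<in> Hom C Z Z"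
    and f: "f \<in> Hom (ct (ct C)) ((X, \<phi>), \<psi>) ((Y, \<phi>'), \<psi>')"
    and g: "g \<in> Hom (ct (ct C)) ((Y, \<phi>'), \<psi>') ((Z, \<phi>''), \<psi>'')"
  shows "Cmp C X Y Z g f \<in> Hom (ct (ct C)) ((X, \<phi>), \<psi>) ((Z, \<phi>''), \<psi>'')"
proof -
  have f': "f \<in> Hom C X Y" "Cmp C (Po X) X Y f \<phi> = Cmp C (Po X) (Po Y) Y \<phi>' (Pa X Y f)"
      "Cmp C X X Y f \<psi> = Cmp C X Y Y \<psi>' f"
    and g': "g \<in> Hom C Y Z" "Cmp C (Po Y) Y Z g \<phi>' = Cmp C (Po Y) (Po Z) Z \<phi>'' (Pa Y Z g)"
      "Cmp C Y Y Z g \<psi>' = Cmp C Y Z Z \<psi>'' g"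
    using f g unfolding ctct_Hom by auto
  have "Cmp C (Po X) X Z (Cmp C X Y Z g f) \<phi> = Cmp C (Po X) Y Z g (Cmp C (Po X) X Y f \<phi>)"
    using X \<phi> f' g' by simp
  also have "\<dots> = Cmp C (Po X) (Po Y) Z (Cmp C (Po Y) Y Z g \<phi>') (Pa X Y f)"
    using X \<phi> f'(1,2) g'(1) by simp
  also have "\<dots> = Cmp C (Po X) (Po Z) Z \<phi>'' (Pa X Z (Cmp C X Y Z g f))"
    using X \<phi> f'(1) g'(1,2) by simp
  finally have 1: "Cmp C (Po X) X Z (Cmp C X Y Z g f) \<phi> = Cmp C (Po X) (Po Z) Z \<phi>'' (Pa X Z (Cmp C X Y Z g f))" .
  have "Cmp C X X Z (Cmp C X Y Z g f) \<psi> = Cmp C X Y Z g (Cmp C X X Y f \<psi>)"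
    using X \<psi> f' g' by simp
  also have "\<dots> = Cmp C X Y Z (Cmp C Y Y Z g \<psi>') f"
    using X \<psi> f'(1,3) g'(1) by simp
  also have "\<dots> = Cmp C X Z Z \<psi>'' (Cmp C X Y Z g f)"
    using X \<psi> f'(1) g'(1,3) by simp
  finally show ?thesis
    unfolding ctct_Hom using 1 X f' g' by simp
qed

lemma ctct_category: "category (ct (ct C))"
  unfolding category_def
proof (intro conjI ballI)
  fix A assume "A \<in> Ob (ct (ct C))"
  moreover obtain X \<phi> \<psi> where A: "A = ((X, \<phi>), \<psi>)" by (metis prod.exhaust)
  ultimately have "X \<in> Ob C" "\<phi> \<in> Hom C (Po X) X" "\<psi> \<in> Hom C X X" using ctct_ob_parts by auto
  then show "Id (ct (ct C)) A \<in> Hom (ct (ct C)) A A" unfolding A ctct_Hom by simp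
next
  fix A B E f g assume a: "A \<in> Ob (ct (ct C))" "B \<in> Ob (ct (ct C))" "E \<in> Ob (ct (ct C))"
    "f \<in> Hom (ct (ct C)) A B" "g \<in> Hom (ct (ct C)) B E"
  obtain X \<phi> \<psi> Y \<phi>' \<psi>' Z \<phi>'' \<psi>'' where ABE: "A = ((X, \<phi>), \<psi>)" "B = ((Y, \<phi>'), \<psi>')" "E = ((Z, \<phi>''), \<psi>'')"
    by (metis prod.exhaust)
  have "X \<in> Ob C" "Y \<in> Ob C" "Z \<in> Ob C"
    "\<phi> \<in> Hom C (Po X) X" "\<phi>' \<in> Hom C (Po Y) Y" "\<phi>'' \<in> Hom C (Po Z) Z"
    "\<psi> \<in> Hom C X X" "\<psi>' \<in> Hom C Y Y" "\<psi>'' \<in> Hom C Z Z"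
    using a(1-3) ctct_ob_parts unfolding ABE by blast+
  from ctct_cmp_hom[OF this a(4,5)[unfolded ABE]]
  show "Cmp (ct (ct C)) A B E g f \<in> Hom (ct (ct C)) A E"
    unfolding ABE by simp
next
  fix A B f assume a: "A \<in> Ob (ct (ct C))" "B \<in> Ob (ct (ct C))" "f \<in> Hom (ct (ct C)) A B"
  obtain X \<phi> \<psi> Y \<phi>' \<psi>' where AB: "A = ((X, \<phi>), \<psi>)" "B = ((Y, \<phi>'), \<psi>')" by (metis prod.exhaust)
  have "X \<in> Ob C" "Y \<in> Ob C" "f \<in> Hom C X Y"
    using a ctct_ob_parts unfolding AB ctct_Hom by auto
  then show "Cmp (ct (ct C)) A B B (Id (ct (ct C)) B) f = f" "Cmp (ct (ct C)) A A B f (Id (ct (ct C)) A) = f"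
    unfolding AB by simp_all
next
  fix A B E G f g h assume a: "A \<in> Ob (ct (ct C))" "B \<in> Ob (ct (ct C))" "E \<in> Ob (ct (ct C))" "G \<in> Ob (ct (ct C))"
    "f \<in> Hom (ct (ct C)) A B" "g \<in> Hom (ct (ct C)) B E" "h \<in> Hom (ct (ct C)) E G"
  obtain X \<phi> \<psi> Y \<phi>' \<psi>' Z \<phi>'' \<psi>'' W \<phi>3 \<psi>3
    where ABEG: "A = ((X, \<phi>), \<psi>)" "B = ((Y, \<phi>'), \<psi>')" "E = ((Z, \<phi>''), \<psi>'')" "G = ((W, \<phi>3), \<psi>3)"
    by (metis prod.exhaust)
  have "X \<in> Ob C" "Y \<in> Ob C" "Z \<in> Ob C" "W \<in> Ob C" "f \<in> Hom C X Y" "g \<in> Hom C Y Z" "h \<in> Hom C Z W"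
    using a ctct_ob_parts unfolding ABEG ctct_Hom by auto
  then show "Cmp (ct (ct C)) A E G h (Cmp (ct (ct C)) A B E g f) =
             Cmp (ct (ct C)) A B G (Cmp (ct (ct C)) B E G h g) f"
    unfolding ABEG by simp
qed

lemma ctct_isoI:
  assumes X: "X \<in> Ob C" "Y \<in> Ob C"
    and \<phi>: "\<phi> \<in> Hom C (Po X) X" "\<phi>' \<in> Hom C (Po Y) Y" and \<psi>: "\<psi> \<in> Hom C X X" "\<psi>' \<in> Hom C Y Y"
    and u: "u \<in> Hom (ct (ct C)) ((X, \<phi>), \<psi>) ((Y, \<phi>'), \<psi>')" and v: "v \<in> Hom C Y X"
    and vu: "Cmp C X Y X v u = Id C X" and uv: "Cmp C Y X Y u v = Id C Y"
  shows "iso (ct (ct C)) ((X, \<phi>), \<psi>) ((Y, \<phi>'), \<psi>') u"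
proof -
  have uh: "u \<in> Hom C X Y" and u\<phi>: "Cmp C (Po X) X Y u \<phi> = Cmp C (Po X) (Po Y) Y \<phi>' (Pa X Y u)"
    and u\<psi>: "Cmp C X X Y u \<psi> = Cmp C X Y Y \<psi>' u"
    using u unfolding ctct_Hom by auto
  have Puv: "Cmp C (Po Y) (Po X) (Po Y) (Pa X Y u) (Pa Y X v) = Id C (Po Y)"
    using uv X uh v by simp
  have "Cmp C (Po Y) Y X v \<phi>' =
        Cmp C (Po Y) Y X v (Cmp C (Po Y) (Po X) Y (Cmp C (Po X) (Po Y) Y \<phi>' (Pa X Y u)) (Pa Y X v))"
    using Puv X \<phi> uh v by simp
  also have "\<dots> = Cmp C (Po Y) (Po X) X \<phi> (Pa Y X v)"
    unfolding u\<phi>[symmetric] using vu X \<phi> uh v by (simp flip: cmp_assoc)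
  finally have v\<phi>: "Cmp C (Po Y) Y X v \<phi>' = Cmp C (Po Y) (Po X) X \<phi> (Pa Y X v)" .
  have "Cmp C Y Y X v \<psi>' = Cmp C Y Y X v (Cmp C Y X Y (Cmp C X Y Y \<psi>' u) v)"
    using uv X \<psi> uh v by simp
  also have "\<dots> = Cmp C Y X X \<psi> v"
    unfolding u\<psi>[symmetric] using vu X \<psi> uh v by (simp flip: cmp_assoc)
  finally have v\<psi>: "Cmp C Y Y X v \<psi>' = Cmp C Y X X \<psi> v" .
  have "v \<in> Hom (ct (ct C)) ((Y, \<phi>'), \<psi>') ((X, \<phi>), \<psi>)"
    unfolding ctct_Hom using v v\<phi> v\<psi> by blast
  then show ?thesis unfolding iso_def using u vu uv by auto
qed

section \<open>The comparison functor\<close>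

definition twin_data where
  "twin_data X = (SOME (S, p1, p2, i1, i2). is_biproduct C S X (Po X) p1 p2 i1 i2)"

definition "tw X = fst (twin_data X)"
definition "pr1 X = fst (snd (twin_data X))"
definition "pr2 X = fst (snd (snd (twin_data X)))"
definition "in1 X = fst (snd (snd (snd (twin_data X))))"
definition "in2 X = snd (snd (snd (snd (twin_data X))))"

lemma is_biproduct_tw:
  assumes "X \<in> Ob C"
  shows "is_biproduct C (tw X) X (Po X) (pr1 X) (pr2 X) (in1 X) (in2 X)"
proof -
  from biproduct_exists[OF assms pi_ob[OF assms]]
  have "\<exists>d. case d of (S, p1, p2, i1, i2) \<Rightarrow> is_biproduct C S X (Po X) p1 p2 i1 i2"
    by (metis case_prod_conv)
  then have "case twin_data X of (S, p1, p2, i1, i2) \<Rightarrow> is_biproduct C S X (Po X) p1 p2 i1 i2"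
    unfolding twin_data_def by (rule someI_ex)
  then show ?thesis
    unfolding tw_def pr1_def pr2_def in1_def in2_def by (simp split: prod.splits)
qed

lemma tw_ob[simp]: "X \<in> Ob C \<Longrightarrow> tw X \<in> Ob C"
  and pr1_hom[simp]: "X \<in> Ob C \<Longrightarrow> pr1 X \<in> Hom C (tw X) X"
  and pr2_hom[simp]: "X \<in> Ob C \<Longrightarrow> pr2 X \<in> Hom C (tw X) (Po X)"
  and in1_hom[simp]: "X \<in> Ob C \<Longrightarrow> in1 X \<in> Hom C X (tw X)"
  and in2_hom[simp]: "X \<in> Ob C \<Longrightarrow> in2 X \<in> Hom C (Po X) (tw X)"
  and pr1_in1[simp]: "X \<in> Ob C \<Longrightarrow> Cmp C X (tw X) X (pr1 X) (in1 X) = Id C X"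
  and pr2_in2[simp]: "X \<in> Ob C \<Longrightarrow> Cmp C (Po X) (tw X) (Po X) (pr2 X) (in2 X) = Id C (Po X)"
  and pr1_in2[simp]: "X \<in> Ob C \<Longrightarrow> Cmp C (Po X) (tw X) X (pr1 X) (in2 X) = Zero C (Po X) X"
  and pr2_in1[simp]: "X \<in> Ob C \<Longrightarrow> Cmp C X (tw X) (Po X) (pr2 X) (in1 X) = Zero C X (Po X)"
  using is_biproduct_tw unfolding is_biproduct_def by blast+

lemma is_biproduct_pi_tw:
  "X \<in> Ob C \<Longrightarrow> is_biproduct C (Po (tw X)) (Po X) (Po (Po X))
     (Pa (tw X) X (pr1 X)) (Pa (tw X) (Po X) (pr2 X)) (Pa X (tw X) (in1 X)) (Pa (Po X) (tw X) (in2 X))"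
  by (rule pi_is_biproduct[OF is_biproduct_tw]) simp_all

lemma is_biproduct_pi_pi_tw:
  "X \<in> Ob C \<Longrightarrow> is_biproduct C (Po (Po (tw X))) (Po (Po X)) (Po (Po (Po X)))
     (Pa (Po (tw X)) (Po X) (Pa (tw X) X (pr1 X))) (Pa (Po (tw X)) (Po (Po X)) (Pa (tw X) (Po X) (pr2 X)))
     (Pa (Po X) (Po (tw X)) (Pa X (tw X) (in1 X))) (Pa (Po (Po X)) (Po (tw X)) (Pa (Po X) (tw X) (in2 X)))"
  by (rule pi_is_biproduct[OF is_biproduct_pi_tw]) simp_all

text \<open>Under \<open>\<Pi>(X \<oplus> \<Pi>X) = \<Pi>X \<oplus> \<Pi>\<^sup>2X\<close>, the map \<open>\<phi>\<close> below is the summand swap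
  \<open>\<Pi>X \<oplus> \<Pi>\<^sup>2X \<rightarrow> X \<oplus> \<Pi>X\<close> with entries \<open>1\<close> and \<open>\<xi>\<close>, and \<open>\<psi> = 1 \<oplus> -1\<close>.\<close>

definition "tw_phi X = Add C (Po (tw X)) (tw X)
   (Cmp C (Po (tw X)) (Po X) (tw X) (in2 X) (Pa (tw X) X (pr1 X)))
   (Cmp C (Po (tw X)) X (tw X) (in1 X) (Cmp C (Po (tw X)) (Po (Po X)) X (Xi C X) (Pa (tw X) (Po X) (pr2 X))))"

definition "tw_phi_inv X = Add C (tw X) (Po (tw X))
   (Cmp C (tw X) (Po X) (Po (tw X)) (Pa X (tw X) (in1 X)) (pr2 X))
   (Cmp C (tw X) (Po (Po X)) (Po (tw X)) (Pa (Po X) (tw X) (in2 X)) (Cmp C (tw X) X (Po (Po X)) (xi_inv X) (pr1 X)))"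

definition "tw_psi X = Add C (tw X) (tw X) (Cmp C (tw X) X (tw X) (in1 X) (pr1 X))
   (Smul C (tw X) (tw X) (-1) (Cmp C (tw X) (Po X) (tw X) (in2 X) (pr2 X)))"

definition "F_obj X = ((tw X, tw_phi X), tw_psi X)"

definition "F_arr X Y f = Add C (tw X) (tw Y) (Cmp C (tw X) Y (tw Y) (in1 Y) (Cmp C (tw X) X Y f (pr1 X)))
   (Cmp C (tw X) (Po Y) (tw Y) (in2 Y) (Cmp C (tw X) (Po X) (Po Y) (Pa X Y f) (pr2 X)))"

lemma tw_phi_hom[simp]: "X \<in> Ob C \<Longrightarrow> tw_phi X \<in> Hom C (Po (tw X)) (tw X)"
  and tw_phi_inv_hom[simp]: "X \<in> Ob C \<Longrightarrow> tw_phi_inv X \<in> Hom C (tw X) (Po (tw X))"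
  and tw_psi_hom[simp]: "X \<in> Ob C \<Longrightarrow> tw_psi X \<in> Hom C (tw X) (tw X)"
  and F_arr_hom[simp]: "X \<in> Ob C \<Longrightarrow> Y \<in> Ob C \<Longrightarrow> f \<in> Hom C X Y \<Longrightarrow> F_arr X Y f \<in> Hom C (tw X) (tw Y)"
  unfolding tw_phi_def tw_phi_inv_def tw_psi_def F_arr_def by simp_all

lemma tw_phi_tw_phi_inv: "X \<in> Ob C \<Longrightarrow> Cmp C (tw X) (Po (tw X)) (tw X) (tw_phi X) (tw_phi_inv X) = Id C (tw X)"
  by (rule biproduct_hom_eq[OF is_biproduct_tw[of X] is_biproduct_tw[of X]]) (simp_all add: tw_phi_def tw_phi_inv_def)

lemma tw_phi_inv_tw_phi:
  "X \<in> Ob C \<Longrightarrow> Cmp C (Po (tw X)) (tw X) (Po (tw X)) (tw_phi_inv X) (tw_phi X) = Id C (Po (tw X))"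
  by (rule biproduct_hom_eq[OF is_biproduct_pi_tw[of X] is_biproduct_pi_tw[of X]]) (simp_all add: tw_phi_def tw_phi_inv_def)

lemma tw_phi_pi_tw_phi:
  "X \<in> Ob C \<Longrightarrow> Cmp C (Po (Po (tw X))) (Po (tw X)) (tw X) (tw_phi X) (Pa (Po (tw X)) (tw X) (tw_phi X)) = Xi C (tw X)"
  by (rule biproduct_hom_eq[OF is_biproduct_pi_pi_tw[of X] is_biproduct_tw[of X]])
    (simp_all add: tw_phi_def xi_natural_cmp[of "tw X" X _ "pr1 X"] xi_natural_cmp[of "tw X" "Po X" _ "pr2 X"])

lemma tw_psi_tw_psi: "X \<in> Ob C \<Longrightarrow> Cmp C (tw X) (tw X) (tw X) (tw_psi X) (tw_psi X) = Id C (tw X)"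
  by (rule biproduct_hom_eq[OF is_biproduct_tw[of X] is_biproduct_tw[of X]]) (simp_all add: tw_psi_def)

lemma tw_psi_neg_tw_phi:
  "X \<in> Ob C \<Longrightarrow> Cmp C (Po (tw X)) (tw X) (tw X) (tw_psi X) (Smul C (Po (tw X)) (tw X) (-1) (tw_phi X)) =
     Cmp C (Po (tw X)) (Po (tw X)) (tw X) (tw_phi X) (Pa (tw X) (tw X) (tw_psi X))"
  by (rule biproduct_hom_eq[OF is_biproduct_pi_tw[of X] is_biproduct_tw[of X]]) (simp_all add: tw_psi_def tw_phi_def)

lemma tw_psi_tw_phi:
  "X \<in> Ob C \<Longrightarrow> Cmp C (Po (tw X)) (tw X) (tw X) (tw_psi X) (tw_phi X) =
     Cmp C (Po (tw X)) (Po (tw X)) (tw X) (Smul C (Po (tw X)) (tw X) (-1) (tw_phi X)) (Pa (tw X) (tw X) (tw_psi X))"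
  by (rule biproduct_hom_eq[OF is_biproduct_pi_tw[of X] is_biproduct_tw[of X]]) (simp_all add: tw_psi_def tw_phi_def)

lemma F_arr_tw_phi:
  "X \<in> Ob C \<Longrightarrow> Y \<in> Ob C \<Longrightarrow> f \<in> Hom C X Y \<Longrightarrow>
   Cmp C (Po (tw X)) (tw X) (tw Y) (F_arr X Y f) (tw_phi X) =
   Cmp C (Po (tw X)) (Po (tw Y)) (tw Y) (tw_phi Y) (Pa (tw X) (tw Y) (F_arr X Y f))"
  by (rule biproduct_hom_eq[OF is_biproduct_pi_tw[of X] is_biproduct_tw[of Y]])
    (simp_all add: F_arr_def tw_phi_def xi_natural_cmp[of X Y _ f])

lemma F_arr_tw_psi:
  "X \<in> Ob C \<Longrightarrow> Y \<in> Ob C \<Longrightarrow> f \<in> Hom C X Y \<Longrightarrow>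
   Cmp C (tw X) (tw X) (tw Y) (F_arr X Y f) (tw_psi X) = Cmp C (tw X) (tw Y) (tw Y) (tw_psi Y) (F_arr X Y f)"
  by (rule biproduct_hom_eq[OF is_biproduct_tw[of X] is_biproduct_tw[of Y]]) (simp_all add: F_arr_def tw_psi_def)

lemma F_arr_id: "X \<in> Ob C \<Longrightarrow> F_arr X X (Id C X) = Id C (tw X)"
  by (rule biproduct_hom_eq[OF is_biproduct_tw[of X] is_biproduct_tw[of X]]) (simp_all add: F_arr_def)

lemma F_arr_cmp:
  "X \<in> Ob C \<Longrightarrow> Y \<in> Ob C \<Longrightarrow> Z \<in> Ob C \<Longrightarrow> f \<in> Hom C X Y \<Longrightarrow> g \<in> Hom C Y Z \<Longrightarrow>
   F_arr X Z (Cmp C X Y Z g f) = Cmp C (tw X) (tw Y) (tw Z) (F_arr Y Z g) (F_arr X Y f)"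
  by (rule biproduct_hom_eq[OF is_biproduct_tw[of X] is_biproduct_tw[of Z]]) (simp_all add: F_arr_def)

lemma F_obj_ob:
  assumes X: "X \<in> Ob C"
  shows "F_obj X \<in> Ob (ct (ct C))"
proof -
  have "iso C (Po (tw X)) (tw X) (tw_phi X)"
    unfolding iso_def using X tw_phi_tw_phi_inv[OF X] tw_phi_inv_tw_phi[OF X] tw_phi_inv_hom[OF X] by auto
  moreover have "tw_psi X \<in> Hom (ct C) (tw X, Smul C (Po (tw X)) (tw X) (- 1) (tw_phi X)) (tw X, tw_phi X)"
    and "tw_psi X \<in> Hom (ct C) (tw X, tw_phi X) (tw X, Smul C (Po (tw X)) (tw X) (- 1) (tw_phi X))"
    unfolding ct_Hom using X tw_psi_neg_tw_phi tw_psi_tw_phi by simp_all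
  ultimately show ?thesis
    unfolding F_obj_def ctct_Ob ct_Ob iso_def using X tw_phi_pi_tw_phi tw_psi_tw_psi by auto
qed

lemma F_arr_ctct_hom:
  "X \<in> Ob C \<Longrightarrow> Y \<in> Ob C \<Longrightarrow> f \<in> Hom C X Y \<Longrightarrow> F_arr X Y f \<in> Hom (ct (ct C)) (F_obj X) (F_obj Y)"
  unfolding F_obj_def ctct_Hom using F_arr_tw_phi F_arr_tw_psi by simp

lemma F_functor: "functor_on C (ct (ct C)) F_obj F_arr"
  unfolding functor_on_def using F_obj_ob F_arr_ctct_hom F_arr_id F_arr_cmp by (simp add: F_obj_def)

lemma F_faithful:
  assumes "X \<in> Ob C" "Y \<in> Ob C" "f \<in> Hom C X Y" "g \<in> Hom C X Y" "F_arr X Y f = F_arr X Y g"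
  shows "f = g"
proof -
  have "Cmp C X (tw Y) Y (pr1 Y) (Cmp C X (tw X) (tw Y) (F_arr X Y h) (in1 X)) = h" if "h \<in> Hom C X Y" for h
    using assms that by (simp add: F_arr_def)
  then show ?thesis using assms by metis
qed

text \<open>\<open>\<alpha>\<^sub>X : F(\<Pi>X) \<rightarrow> \<Pi>(F X) = (X \<oplus> \<Pi>X, \<phi>, -\<psi>)\<close> is the same summand swap, now from
  \<open>\<Pi>X \<oplus> \<Pi>\<^sup>2X\<close> as the biproduct object of \<open>F(\<Pi>X)\<close>.\<close>

definition "F_alpha X = Add C (tw (Po X)) (tw X)
  (Cmp C (tw (Po X)) X (tw X) (in1 X) (Cmp C (tw (Po X)) (Po (Po X)) X (Xi C X) (pr2 (Po X))))
  (Cmp C (tw (Po X)) (Po X) (tw X) (in2 X) (pr1 (Po X)))"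

definition "F_alpha_inv X = Add C (tw X) (tw (Po X))
  (Cmp C (tw X) (Po X) (tw (Po X)) (in1 (Po X)) (pr2 X))
  (Cmp C (tw X) (Po (Po X)) (tw (Po X)) (in2 (Po X)) (Cmp C (tw X) X (Po (Po X)) (xi_inv X) (pr1 X)))"

lemma F_alpha_hom[simp]: "X \<in> Ob C \<Longrightarrow> F_alpha X \<in> Hom C (tw (Po X)) (tw X)"
  and F_alpha_inv_hom[simp]: "X \<in> Ob C \<Longrightarrow> F_alpha_inv X \<in> Hom C (tw X) (tw (Po X))"
  unfolding F_alpha_def F_alpha_inv_def by simp_all

lemma F_alpha_F_alpha_inv: "X \<in> Ob C \<Longrightarrow> Cmp C (tw X) (tw (Po X)) (tw X) (F_alpha X) (F_alpha_inv X) = Id C (tw X)"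
  by (rule biproduct_hom_eq[OF is_biproduct_tw[of X] is_biproduct_tw[of X]]) (simp_all add: F_alpha_def F_alpha_inv_def)

lemma F_alpha_inv_F_alpha:
  "X \<in> Ob C \<Longrightarrow> Cmp C (tw (Po X)) (tw X) (tw (Po X)) (F_alpha_inv X) (F_alpha X) = Id C (tw (Po X))"
  by (rule biproduct_hom_eq[OF is_biproduct_tw[of "Po X"] is_biproduct_tw[of "Po X"]]) (simp_all add: F_alpha_def F_alpha_inv_def)

lemma F_alpha_tw_phi:
  "X \<in> Ob C \<Longrightarrow> Cmp C (Po (tw (Po X))) (tw (Po X)) (tw X) (F_alpha X) (tw_phi (Po X)) =
     Cmp C (Po (tw (Po X))) (Po (tw X)) (tw X) (tw_phi X) (Pa (tw (Po X)) (tw X) (F_alpha X))"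
  by (rule biproduct_hom_eq[OF is_biproduct_pi_tw[of "Po X"] is_biproduct_tw[of X]]) (simp_all add: F_alpha_def tw_phi_def)

lemma F_alpha_tw_psi:
  "X \<in> Ob C \<Longrightarrow> Cmp C (tw (Po X)) (tw (Po X)) (tw X) (F_alpha X) (tw_psi (Po X)) =
     Cmp C (tw (Po X)) (tw X) (tw X) (Smul C (tw X) (tw X) (-1) (tw_psi X)) (F_alpha X)"
  by (rule biproduct_hom_eq[OF is_biproduct_tw[of "Po X"] is_biproduct_tw[of X]]) (simp_all add: F_alpha_def tw_psi_def)

lemma F_alpha_natural:
  "X \<in> Ob C \<Longrightarrow> Y \<in> Ob C \<Longrightarrow> f \<in> Hom C X Y \<Longrightarrow>
   Cmp C (tw (Po X)) (tw X) (tw Y) (F_arr X Y f) (F_alpha X) =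
   Cmp C (tw (Po X)) (tw (Po Y)) (tw Y) (F_alpha Y) (F_arr (Po X) (Po Y) (Pa X Y f))"
  by (rule biproduct_hom_eq[OF is_biproduct_tw[of "Po X"] is_biproduct_tw[of Y]])
    (simp_all add: F_alpha_def F_arr_def xi_natural_cmp[of X Y _ f])

lemma F_alpha_coherent:
  "X \<in> Ob C \<Longrightarrow> Cmp C (tw (Po (Po X))) (tw (Po X)) (tw X) (F_alpha X) (F_alpha (Po X)) = F_arr (Po (Po X)) X (Xi C X)"
  by (rule biproduct_hom_eq[OF is_biproduct_tw[of "Po (Po X)"] is_biproduct_tw[of X]]) (simp_all add: F_alpha_def F_arr_def)

lemma F_superfunctor: "superfunctor C (ct (ct C)) F_obj F_arr F_alpha"
  unfolding superfunctor_def
proof (intro conjI)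
  show "nat_iso C (ct (ct C)) (\<lambda>X. F_obj (Po X)) (\<lambda>X Y f. F_arr (Po X) (Po Y) (Pa X Y f))
     (\<lambda>X. PiO (ct (ct C)) (F_obj X)) (\<lambda>X Y f. PiA (ct (ct C)) (F_obj X) (F_obj Y) (F_arr X Y f)) F_alpha"
    unfolding nat_iso_def
  proof (intro conjI ballI)
    fix X assume X: "X \<in> Ob C"
    have \<alpha>: "F_alpha X \<in> Hom (ct (ct C)) (F_obj (Po X)) (PiO (ct (ct C)) (F_obj X))"
      unfolding F_obj_def ctct_PiO ctct_Hom using X F_alpha_tw_phi F_alpha_tw_psi by simp
    show "iso (ct (ct C)) (F_obj (Po X)) (PiO (ct (ct C)) (F_obj X)) (F_alpha X)"
      unfolding F_obj_def ctct_PiO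
      by (rule ctct_isoI[OF _ _ _ _ _ _ \<alpha>[unfolded F_obj_def ctct_PiO], where v="F_alpha_inv X"])
        (use X F_alpha_F_alpha_inv F_alpha_inv_F_alpha in simp_all)
  qed (simp add: F_obj_def F_alpha_natural)
qed (use F_functor F_alpha_coherent in \<open>simp_all add: F_obj_def\<close>)


lemma F_full:
  assumes two: "(2::'k) dvd 1" and X: "X \<in> Ob C" "Y \<in> Ob C" and g: "g \<in> Hom (ct (ct C)) (F_obj X) (F_obj Y)"
  shows "\<exists>f\<in>Hom C X Y. F_arr X Y f = g"
proof
  have gh: "g \<in> Hom C (tw X) (tw Y)"
    and g\<phi>: "Cmp C (Po (tw X)) (tw X) (tw Y) g (tw_phi X) =
      Cmp C (Po (tw X)) (Po (tw Y)) (tw Y) (tw_phi Y) (Pa (tw X) (tw Y) g)"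
    and g\<psi>: "Cmp C (tw X) (tw X) (tw Y) g (tw_psi X) = Cmp C (tw X) (tw Y) (tw Y) (tw_psi Y) g"
    using g unfolding F_obj_def ctct_Hom by auto
  define f where "f = Cmp C X (tw Y) Y (pr1 Y) (Cmp C X (tw X) (tw Y) g (in1 X))"
  show "f \<in> Hom C X Y" unfolding f_def using X gh by simp
  have "Cmp C X (tw Y) (Po Y) (pr2 Y) (Cmp C X (tw X) (tw Y) (Cmp C (tw X) (tw X) (tw Y) g (tw_psi X)) (in1 X)) =
        Cmp C X (tw Y) (Po Y) (pr2 Y) (Cmp C X (tw X) (tw Y) (Cmp C (tw X) (tw Y) (tw Y) (tw_psi Y) g) (in1 X))"
    by (simp only: g\<psi>)
  then have "Cmp C X (tw Y) (Po Y) (pr2 Y) (Cmp C X (tw X) (tw Y) g (in1 X)) =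
     Smul C X (Po Y) (-1) (Cmp C X (tw Y) (Po Y) (pr2 Y) (Cmp C X (tw X) (tw Y) g (in1 X)))"
    using X gh by (simp add: tw_psi_def)
  then have c21: "Cmp C X (tw Y) (Po Y) (pr2 Y) (Cmp C X (tw X) (tw Y) g (in1 X)) = Zero C X (Po Y)"
    using eq_neg_self_zero[OF two] X gh by simp
  have "Cmp C (Po X) (tw Y) Y (pr1 Y) (Cmp C (Po X) (tw X) (tw Y) (Cmp C (tw X) (tw X) (tw Y) g (tw_psi X)) (in2 X)) =
        Cmp C (Po X) (tw Y) Y (pr1 Y) (Cmp C (Po X) (tw X) (tw Y) (Cmp C (tw X) (tw Y) (tw Y) (tw_psi Y) g) (in2 X))"
    by (simp only: g\<psi>)
  then have "Cmp C (Po X) (tw Y) Y (pr1 Y) (Cmp C (Po X) (tw X) (tw Y) g (in2 X)) =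
     Smul C (Po X) Y (-1) (Cmp C (Po X) (tw Y) Y (pr1 Y) (Cmp C (Po X) (tw X) (tw Y) g (in2 X)))"
    using X gh by (simp add: tw_psi_def)
  then have c12: "Cmp C (Po X) (tw Y) Y (pr1 Y) (Cmp C (Po X) (tw X) (tw Y) g (in2 X)) = Zero C (Po X) Y"
    using eq_neg_self_zero[OF two] X gh by simp
  have "Cmp C (Po X) (tw Y) (Po Y) (pr2 Y)
          (Cmp C (Po X) (Po (tw X)) (tw Y) (Cmp C (Po (tw X)) (tw X) (tw Y) g (tw_phi X)) (Pa X (tw X) (in1 X))) =
        Cmp C (Po X) (tw Y) (Po Y) (pr2 Y) (Cmp C (Po X) (Po (tw X)) (tw Y)
          (Cmp C (Po (tw X)) (Po (tw Y)) (tw Y) (tw_phi Y) (Pa (tw X) (tw Y) g)) (Pa X (tw X) (in1 X)))"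
    by (simp only: g\<phi>)
  then have c22: "Cmp C (Po X) (tw Y) (Po Y) (pr2 Y) (Cmp C (Po X) (tw X) (tw Y) g (in2 X)) =
     Cmp C (Po X) (Po (tw Y)) (Po Y) (Pa (tw Y) Y (pr1 Y))
       (Cmp C (Po X) (Po (tw X)) (Po (tw Y)) (Pa (tw X) (tw Y) g) (Pa X (tw X) (in1 X)))"
    using X gh by (simp add: tw_phi_def)
  show "F_arr X Y f = g"
    by (rule biproduct_hom_eq[OF is_biproduct_tw[of X] is_biproduct_tw[of Y]])
      (use X gh c21 c12 c22 in \<open>simp_all add: F_arr_def f_def\<close>)
qed


lemma pi_cmp_absorb:
  "Cmp C X Y Y g f = f \<Longrightarrow> X \<in> Ob C \<Longrightarrow> Y \<in> Ob C \<Longrightarrow> f \<in> Hom C X Y \<Longrightarrow> g \<in> Hom C Y Y \<Longrightarrow>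
   Cmp C (Po X) (Po Y) (Po Y) (Pa Y Y g) (Pa X Y f) = Pa X Y f"
  by (metis pi_cmp)

text \<open>An inverse image of \<open>((Y, \<phi>), \<psi>)\<close>: \<open>K\<close> is the image of \<open>e = (1 + \<psi>)/2\<close>, split as \<open>e = k \<circ> r\<close>,
  and \<open>(k, \<phi> \<circ> \<Pi>k) : K \<oplus> \<Pi>K \<rightarrow> Y\<close> is the isomorphism.\<close>

context
  fixes Y \<phi> \<phi>' \<psi> e K k r
  assumes two: "(2::'k) dvd 1"
    and Y: "Y \<in> Ob C"
    and \<phi>: "\<phi> \<in> Hom C (Po Y) Y" "\<phi>' \<in> Hom C Y (Po Y)"
      "Cmp C (Po Y) Y (Po Y) \<phi>' \<phi> = Id C (Po Y)" "Cmp C Y (Po Y) Y \<phi> \<phi>' = Id C Y"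
    and \<phi>_\<xi>: "Cmp C (Po (Po Y)) (Po Y) Y \<phi> (Pa (Po Y) Y \<phi>) = Xi C Y"
    and \<psi>: "\<psi> \<in> Hom C Y Y"
    and \<psi>_\<phi>: "Cmp C (Po Y) Y Y \<psi> (Smul C (Po Y) Y (-1) \<phi>) = Cmp C (Po Y) (Po Y) Y \<phi> (Pa Y Y \<psi>)"
    and e: "e \<in> Hom C Y Y" "Add C Y Y e e = Add C Y Y (Id C Y) \<psi>" "Cmp C Y Y Y \<psi> e = e"
    and K: "K \<in> Ob C" "k \<in> Hom C K Y" "r \<in> Hom C Y K"
    and rk: "Cmp C K Y K r k = Id C K" and kr: "Cmp C Y K Y k r = e"
begin

declare Y[simp] \<phi>[simp] \<psi>[simp] e(1)[simp] K[simp] rk[simp] cmp_absorb[simp] pi_cmp_absorb[simp]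

lemma split_e_k[simp]: "Cmp C K Y Y e k = k"
  using kr rk by (metis cmp_assoc cmp_id_right K Y)

lemma split_r_e: "Cmp C Y Y K r e = r"
  using kr rk by (metis cmp_assoc cmp_id_left K Y)

lemma split_\<psi>_k[simp]: "Cmp C K Y Y \<psi> k = k"
proof -
  have "Cmp C K Y Y (Cmp C Y Y Y \<psi> e) k = Cmp C K Y Y \<psi> (Cmp C K Y Y e k)"
    by (rule cmp_assoc) simp_all
  then show ?thesis using e(3) split_e_k by metis
qed

lemma split_\<phi>_pi_\<psi>:
  "W \<in> Ob C \<Longrightarrow> h \<in> Hom C W (Po Y) \<Longrightarrow>
   Cmp C W (Po Y) Y \<phi> (Cmp C W (Po Y) (Po Y) (Pa Y Y \<psi>) h) =
   Smul C W Y (-1) (Cmp C W Y Y \<psi> (Cmp C W (Po Y) Y \<phi> h))"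
proof -
  assume W: "W \<in> Ob C" and h: "h \<in> Hom C W (Po Y)"
  have "Cmp C W (Po Y) Y \<phi> (Cmp C W (Po Y) (Po Y) (Pa Y Y \<psi>) h) =
        Cmp C W (Po Y) Y (Cmp C (Po Y) (Po Y) Y \<phi> (Pa Y Y \<psi>)) h"
    using W h by simp
  also have "\<dots> = Cmp C W (Po Y) Y (Cmp C (Po Y) Y Y \<psi> (Smul C (Po Y) Y (-1) \<phi>)) h"
    by (simp only: \<psi>_\<phi>)
  also have "\<dots> = Smul C W Y (-1) (Cmp C W Y Y \<psi> (Cmp C W (Po Y) Y \<phi> h))"
    using W h by simp
  finally show ?thesis .
qed

lemma split_\<psi>_\<phi>:
  "W \<in> Ob C \<Longrightarrow> h \<in> Hom C W (Po Y) \<Longrightarrow>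
   Cmp C W Y Y \<psi> (Cmp C W (Po Y) Y \<phi> h) =
   Smul C W Y (-1) (Cmp C W (Po Y) Y \<phi> (Cmp C W (Po Y) (Po Y) (Pa Y Y \<psi>) h))"
  using split_\<phi>_pi_\<psi> by simp

lemma split_pi_e_double:
  "Add C (Po Y) (Po Y) (Pa Y Y e) (Pa Y Y e) = Add C (Po Y) (Po Y) (Id C (Po Y)) (Pa Y Y \<psi>)"
  using e(2) by (metis pi_add pi_id e(1) \<psi> Y id_hom)

lemma split_r_\<phi>_pi_k: "Cmp C (Po K) Y K r (Cmp C (Po K) (Po Y) Y \<phi> (Pa K Y k)) = Zero C (Po K) K"
proof -
  let ?z = "Cmp C (Po K) (Po Y) Y \<phi> (Pa K Y k)"
  have "Add C (Po K) Y (Cmp C (Po K) Y Y e ?z) (Cmp C (Po K) Y Y e ?z) = Cmp C (Po K) Y Y (Add C Y Y e e) ?z"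
    by simp
  also have "\<dots> = Add C (Po K) Y ?z (Cmp C (Po K) Y Y \<psi> ?z)" using e(2) by simp
  also have "\<dots> = Zero C (Po K) Y"
  proof -
    have "Cmp C (Po K) (Po Y) (Po Y) (Pa Y Y \<psi>) (Pa K Y k) = Pa K Y k" by (rule pi_cmp_absorb) simp_all
    then have \<psi>z: "Cmp C (Po K) Y Y \<psi> ?z = Smul C (Po K) Y (-1) ?z"
      using split_\<psi>_\<phi>[of "Po K" "Pa K Y k"] by simp
    show ?thesis unfolding \<psi>z by simp
  qed
  finally have "Cmp C (Po K) Y Y e ?z = Zero C (Po K) Y"
    by (rule add_self_eq_zero[OF two, rotated 3]) simp_all
  then have "Cmp C (Po K) Y K (Cmp C Y Y K r e) ?z = Zero C (Po K) K"
    by (simp del: cmp_add_left cmp_add_right)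
  then show ?thesis using split_r_e by simp
qed

lemma split_pi_r_\<phi>'_k: "Cmp C K (Po Y) (Po K) (Pa Y K r) (Cmp C K Y (Po Y) \<phi>' k) = Zero C K (Po K)"
proof -
  let ?w = "Cmp C K Y (Po Y) \<phi>' k"
  have "Pa Y Y \<psi> = Cmp C (Po Y) Y (Po Y) \<phi>' (Cmp C (Po Y) (Po Y) Y \<phi> (Pa Y Y \<psi>))" by simp
  also have "\<dots> = Smul C (Po Y) (Po Y) (-1) (Cmp C (Po Y) Y (Po Y) \<phi>' (Cmp C (Po Y) Y Y \<psi> \<phi>))"
    using split_\<phi>_pi_\<psi>[of "Po Y" "Id C (Po Y)"] by simp
  finally have "Cmp C K (Po Y) (Po Y) (Pa Y Y \<psi>) ?w = Smul C K (Po Y) (-1) ?w"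
    by simp
  then have "Add C K (Po Y) (Cmp C K (Po Y) (Po Y) (Pa Y Y e) ?w) (Cmp C K (Po Y) (Po Y) (Pa Y Y e) ?w) =
             Zero C K (Po Y)"
    using split_pi_e_double cmp_add_left[of K "Po Y" "Po Y" ?w "Pa Y Y e" "Pa Y Y e"] by simp
  then have "Cmp C K (Po Y) (Po Y) (Pa Y Y e) ?w = Zero C K (Po Y)"
    by (rule add_self_eq_zero[OF two, rotated 3]) simp_all
  then have "Cmp C K (Po Y) (Po K) (Cmp C (Po Y) (Po Y) (Po K) (Pa Y K r) (Pa Y Y e)) ?w = Zero C K (Po K)"
    by (simp del: pi_cmp)
  then show ?thesis using split_r_e by (simp flip: pi_cmp)
qed

lemma split_e_add_\<phi>_pi_e_\<phi>':
  "Add C Y Y e (Cmp C Y (Po Y) Y \<phi> (Cmp C Y (Po Y) (Po Y) (Pa Y Y e) \<phi>')) = Id C Y"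
proof -
  let ?q = "Cmp C Y (Po Y) Y \<phi> (Cmp C Y (Po Y) (Po Y) (Pa Y Y e) \<phi>')"
  have "Add C Y Y ?q ?q = Cmp C Y (Po Y) Y \<phi> (Cmp C Y (Po Y) (Po Y) (Add C (Po Y) (Po Y) (Pa Y Y e) (Pa Y Y e)) \<phi>')"
    by simp
  also have "\<dots> = Add C Y Y (Id C Y) (Cmp C Y (Po Y) Y \<phi> (Cmp C Y (Po Y) (Po Y) (Pa Y Y \<psi>) \<phi>'))"
    unfolding split_pi_e_double by simp
  also have "\<dots> = Add C Y Y (Id C Y) (Smul C Y Y (-1) \<psi>)"
    using split_\<phi>_pi_\<psi>[of Y \<phi>'] by simp
  finally have qq: "Add C Y Y ?q ?q = Add C Y Y (Id C Y) (Smul C Y Y (-1) \<psi>)" .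
  have "Add C Y Y (Add C Y Y e ?q) (Add C Y Y e ?q) = Add C Y Y (Add C Y Y e e) (Add C Y Y ?q ?q)"
    by (rule add_self_add) simp_all
  also have "\<dots> = Add C Y Y (Id C Y) (Id C Y)"
    unfolding e(2) qq by (rule add_add_neg) simp_all
  finally show ?thesis
    by (rule add_self_cancel[OF two, rotated 4]) simp_all
qed

lemma split_F_obj_iso: "\<exists>u. iso (ct (ct C)) (F_obj K) ((Y, \<phi>), \<psi>) u"
proof
  define u where "u = Add C (tw K) Y (Cmp C (tw K) K Y k (pr1 K))
      (Cmp C (tw K) (Po Y) Y \<phi> (Cmp C (tw K) (Po K) (Po Y) (Pa K Y k) (pr2 K)))"
  define v where "v = Add C Y (tw K) (Cmp C Y K (tw K) (in1 K) r)
      (Cmp C Y (Po K) (tw K) (in2 K) (Cmp C Y (Po Y) (Po K) (Pa Y K r) \<phi>'))"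
  have uh: "u \<in> Hom C (tw K) Y" and vh: "v \<in> Hom C Y (tw K)" unfolding u_def v_def by simp_all
  have \<phi>\<phi>: "Cmp C W (Po Y) Y \<phi> (Cmp C W (Po (Po Y)) (Po Y) (Pa (Po Y) Y \<phi>) h) = Cmp C W (Po (Po Y)) Y (Xi C Y) h"
    if "W \<in> Ob C" "h \<in> Hom C W (Po (Po Y))" for W h
    using that \<phi>_\<xi> by (metis cmp_assoc pi_hom pi_ob \<phi>(1) Y)
  have u\<phi>: "Cmp C (Po (tw K)) (tw K) Y u (tw_phi K) = Cmp C (Po (tw K)) (Po Y) Y \<phi> (Pa (tw K) Y u)"
    by (rule biproduct_eq_via_injections[OF is_biproduct_pi_tw[of K], where T=Y])
      (use uh in \<open>simp_all add: u_def tw_phi_def \<phi>\<phi> xi_natural[of K Y k]\<close>)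
  have u\<psi>: "Cmp C (tw K) (tw K) Y u (tw_psi K) = Cmp C (tw K) Y Y \<psi> u"
    by (rule biproduct_eq_via_injections[OF is_biproduct_tw[of K], where T=Y])
      (use uh in \<open>simp_all add: u_def tw_psi_def split_\<psi>_\<phi>\<close>)
  have vu: "Cmp C (tw K) Y (tw K) v u = Id C (tw K)"
    by (rule biproduct_hom_eq[OF is_biproduct_tw[of K] is_biproduct_tw[of K]])
      (use uh vh split_r_\<phi>_pi_k split_pi_r_\<phi>'_k in \<open>simp_all add: u_def v_def\<close>)
  have krh: "Cmp C W K Y k (Cmp C W Y K r h) = Cmp C W Y Y e h" if "W \<in> Ob C" "h \<in> Hom C W Y" for W h
    using that kr by (metis cmp_assoc K Y)
  have pkrh: "Cmp C W (Po K) (Po Y) (Pa K Y k) (Cmp C W (Po Y) (Po K) (Pa Y K r) h) = Cmp C W (Po Y) (Po Y) (Pa Y Y e) h"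
    if "W \<in> Ob C" "h \<in> Hom C W (Po Y)" for W h
    using that kr by (metis cmp_assoc pi_cmp pi_hom pi_ob K Y)
  have uv: "Cmp C Y (tw K) Y u v = Id C Y"
    using split_e_add_\<phi>_pi_e_\<phi>' by (simp add: u_def v_def krh pkrh kr)
  have "u \<in> Hom (ct (ct C)) (F_obj K) ((Y, \<phi>), \<psi>)"
    unfolding F_obj_def ctct_Hom using uh u\<phi> u\<psi> by blast
  then show "iso (ct (ct C)) (F_obj K) ((Y, \<phi>), \<psi>) u"
    unfolding F_obj_def by (rule ctct_isoI[rotated 6, where v=v]) (use vh vu uv in simp_all)
qed

end

lemma F_essentially_surjective:
  assumes two: "(2::'k) dvd 1" and ic: "idem_complete C" and A: "A \<in> Ob (ct (ct C))"
  shows "\<exists>X\<in>Ob C. \<exists>u. iso (ct (ct C)) (F_obj X) A u"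
proof -
  obtain Y \<phi> \<psi> where A_eq: "A = ((Y, \<phi>), \<psi>)" by (metis prod.exhaust)
  have Y: "Y \<in> Ob C" and \<phi>_iso: "iso C (Po Y) Y \<phi>"
    and \<phi>_\<xi>: "Cmp C (Po (Po Y)) (Po Y) Y \<phi> (Pa (Po Y) Y \<phi>) = Xi C Y"
    and \<psi>_iso: "iso (ct C) (Y, Smul C (Po Y) Y (-1) \<phi>) (Y, \<phi>) \<psi>" and \<psi>\<psi>: "Cmp C Y Y Y \<psi> \<psi> = Id C Y"
    using A unfolding A_eq ctct_Ob ct_Ob by auto
  obtain \<phi>' where \<phi>: "\<phi> \<in> Hom C (Po Y) Y" "\<phi>' \<in> Hom C Y (Po Y)"
    "Cmp C (Po Y) Y (Po Y) \<phi>' \<phi> = Id C (Po Y)" "Cmp C Y (Po Y) Y \<phi> \<phi>' = Id C Y"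
    using \<phi>_iso unfolding iso_def by blast
  have \<psi>: "\<psi> \<in> Hom C Y Y"
    and \<psi>_\<phi>: "Cmp C (Po Y) Y Y \<psi> (Smul C (Po Y) Y (-1) \<phi>) = Cmp C (Po Y) (Po Y) Y \<phi> (Pa Y Y \<psi>)"
    using \<psi>_iso unfolding iso_def ct_Hom by auto
  obtain e where e: "e \<in> Hom C Y Y" "Add C Y Y e e = Add C Y Y (Id C Y) \<psi>" "Cmp C Y Y Y \<psi> e = e"
    and ee: "Cmp C Y Y Y e e = e"
    using involution_idempotent[OF two Y \<psi> \<psi>\<psi>] by blast
  obtain K k r where K: "K \<in> Ob C" "k \<in> Hom C K Y" "r \<in> Hom C Y K"
    and rk: "Cmp C K Y K r k = Id C K" and kr: "Cmp C Y K Y k r = e"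
    using idempotent_splits[OF ic Y e(1) ee] by blast
  have "\<exists>u. iso (ct (ct C)) (F_obj K) ((Y, \<phi>), \<psi>) u"
    by (rule split_F_obj_iso[OF two Y \<phi> \<phi>_\<xi> \<psi> \<psi>_\<phi> e K rk kr])
  then show ?thesis using K(1) unfolding A_eq by blast
qed

lemma F_super_equivalence:
  assumes "(2::'k) dvd 1" and "idem_complete C"
  shows "super_equivalence C (ct (ct C)) F_obj F_arr F_alpha"
proof -
  have "equivalence C (ct (ct C)) F_obj F_arr"
    using cat_axioms cat.intro[OF ctct_category] F_functor F_faithful F_full[OF assms(1)]
      F_essentially_surjective[OF assms]
    by (rule equivalenceI_full_faithful)
  then show ?thesis unfolding super_equivalence_def using F_superfunctor by blast
qed

end

theorem mainTheorem11:
  fixes C :: "('o, 'm, 'k::comm_ring_1) scat"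
  assumes "(2::'k) dvd 1"
    and "supercategory C"
    and "idem_complete C"
  shows "\<exists>FO FA alpha. super_equivalence C (ct (ct C)) FO FA alpha"
proof -
  interpret supercat C by (rule supercat.intro) fact
  from F_super_equivalence[OF assms(1,3)] show ?thesis by blast
qed

end
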